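(* Assume the standing hypotheses described in the context. Take $0\le\theta\le\Theta$ and $N_\theta\in\mathcal N_\theta$. For any $(t_0,\varepsilon_0)\in\Omega$ and $y_0\in K(t_0,\varepsilon_0)$, the sequences \[y_{k+1}=N_\theta(y_k),\qquad (t_{k+1},\varepsilon_{k+1})=n_\theta(t_k,\varepsilon_k),\qquad k=0,1,\dots,\] are well defined, $y_k\in K(t_k,\varepsilon_k)$ and $(t_k,\varepsilon_k)\in\Omega$ for all $k$, the sequence $\{t_k\}$ is strictly increasing and converges to some $\tilde t\in(0,\lambda]$, the sequence $\{\varepsilon_k\}$ is non-decreasing and converges to some $\tilde\varepsilon\in[0,\kappa\lambda]$, \[\|F'(x_0)^{-1}F(y_k)\|\le f(t_k)+\varepsilon_k\le\Big(\frac{1+\theta^2}{2}\Big)^k(f(t_0)+\varepsilon_0),\qquad k=0,1,\dots,\] the sequence $\{y_k\}$ is contained in $B(x_0,\lambda)$ and converges to a point $x_*\in B[x_0,t_*]$ which is the unique zero of $F$ in $B(x_0,\bar\tau)$, and \[\|y_{k+1}-y_k\|\le t_{k+1}-t_k,\qquad \|x_*-y_k\|\le\tilde t-t_k,\qquad k=0,1,\dots.\] Moreover, if $\lambda<R$, then for $k=0,1,\dots$, \[\|x_*-y_{k+1}\|\le\Big[\frac{1+\theta}{2}\frac{D^-f'(\lambda)}{|f'(\lambda)|}\|x_*-y_k\|+\theta\,\frac{2+f'(\lambda)}{|f'(\lambda)|}\Big]\|x_*-y_k\|,\] and if additionally $0\le\theta<\kappa/(4+\kappa)$, then $\|x_*-y_{k+1}\|\le\big[\frac{1+\theta}{2}+\frac{2\theta}{\kappa}\big]\|x_*-y_k\|$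 for $k=0,1,\dots$.
   Context: Standing hypotheses: $\mathbb X,\mathbb Y$ are Banach spaces; $B(x,r)$, $B[x,r]$ are open/closed balls. $R\in\mathbb R$, $C\subseteq\mathbb X$, $F:C\to\mathbb Y$ is continuous and continuously differentiable on $\mathrm{int}(C)$, $x_0\in\mathrm{int}(C)$ with $F'(x_0)$ non-singular, $f:[0,R)\to\mathbb R$ is continuously differentiable, $B(x_0,R)\subseteq C$, $\|F'(x_0)^{-1}[F'(y)-F'(x)]\|\le f'(\|y-x\|+\|x-x_0\|)-f'(\|x-x_0\|)$ for all $x,y\in B(x_0,R)$ with $\|x-x_0\|+\|y-x\|<R$, $\|F'(x_0)^{-1}F(x_0)\|\le f(0)$, and (h1) $f(0)>0$, $f'(0)=-1$; (h2) $f'$ is strictly increasing and convex; (h3) $f(t)<0$ for some $t\in(0,R)$. Notation: $t_*:=\min f^{-1}(\{0\})$, $\bar\tau:=\sup\{t\in[0,R):f(t)<0\}$, $\bar t:=\sup\{t\in[0,R):f'(t)<0\}$, $\kappa:=\sup_{0<t<R}\frac{-f(t)}{t}$, $\lambda:=\sup\{t\in[0,R):\kappa+f'(t)<0\}$, $\Theta:=\kappa/(2-\kappa)$. $D^-f'(\lambda)$ is the left derivative of $f'$ at $\lambda$. For $\theta\ge0$, $n_\theta:[0,\bar t)\times[0,\infty)\to\mathbb R^2$, $n_\theta(t,\varepsilon):=\big(t-(1+\theta)\frac{f(t)+\varepsilon}{f'(t)},\ \varepsilon+2\theta(f(t)+\varepsilon)\big)$. $\Omega:=\{(t,\varepsilon)\in\mathbb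 R^2: 0\le t<\lambda,\ 0\le\varepsilon\le\kappa t,\ 0<f(t)+\varepsilon\}$. $K(t,\varepsilon):=\{x: \|x-x_0\|\le t,\ \|F'(x_0)^{-1}F(x)\|\le f(t)+\varepsilon\}$. $\mathcal N_\theta$ is the family of maps $N:B(x_0,\bar t)\to\mathbb X$ such that $\|F'(x_0)^{-1}[F(x)+F'(x)(N(x)-x)]\|\le\theta\|F'(x_0)^{-1}F(x)\|$ for each $x\in B(x_0,\bar t)$. *)

theory Defs
  imports "HOL-Analysis.Analysis"
begin

definition tstar :: "(real \<Rightarrow> real) \<Rightarrow> real \<Rightarrow> real" where
  "tstar f R = Inf {t \<in> {0..<R}. f t = 0}"

definition taubar :: "(real \<Rightarrow> real) \<Rightarrow> real \<Rightarrow> real" where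
  "taubar f R = Sup {t \<in> {0..<R}. f t < 0}"

definition tbar :: "(real \<Rightarrow> real) \<Rightarrow> real \<Rightarrow> real" where
  "tbar f' R = Sup {t \<in> {0..<R}. f' t < 0}"

definition kappa :: "(real \<Rightarrow> real) \<Rightarrow> real \<Rightarrow> real" where
  "kappa f R = Sup ((\<lambda>t. - f t / t) ` {0<..<R})"

definition lambda :: "(real \<Rightarrow> real) \<Rightarrow> (real \<Rightarrow> real) \<Rightarrow> real \<Rightarrow> real" where
  "lambda f f' R = Sup {t \<in> {0..<R}. kappa f R + f' t < 0}"

definition Theta :: "(real \<Rightarrow> real) \<Rightarrow> real \<Rightarrow> real" where
  "Theta f R = kappa f R / (2 - kappa f R)"

definition left_deriv :: "(real \<Rightarrow> real) \<Rightarrow> real \<Rightarrow> real" where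
  "left_deriv g x = Lim (at_left x) (\<lambda>s. (g s - g x) / (s - x))"

definition n_theta :: "(real \<Rightarrow> real) \<Rightarrow> (real \<Rightarrow> real) \<Rightarrow> real \<Rightarrow> real \<times> real \<Rightarrow> real \<times> real" where
  "n_theta f f' \<theta> p = (let t = fst p; \<epsilon> = snd p in
     (t - (1 + \<theta>) * (f t + \<epsilon>) / f' t, \<epsilon> + 2 * \<theta> * (f t + \<epsilon>)))"

definition Omega :: "(real \<Rightarrow> real) \<Rightarrow> (real \<Rightarrow> real) \<Rightarrow> real \<Rightarrow> (real \<times> real) set" where
  "Omega f f' R = {(t, \<epsilon>). 0 \<le> t \<and> t < lambda f f' R \<and> 0 \<le> \<epsilon> \<and> \<epsilon> \<le> kappa f R * t \<and> 0 < f t + \<epsilon>}"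

(* K(t,\<epsilon>); Finv stands for F'(x0)^{-1} *)
definition Kset :: "('a::banach \<Rightarrow> 'b::banach) \<Rightarrow> ('b \<Rightarrow>\<^sub>L 'a) \<Rightarrow> 'a \<Rightarrow> (real \<Rightarrow> real) \<Rightarrow> real \<Rightarrow> real \<Rightarrow> 'a set" where
  "Kset F Finv x0 f t \<epsilon> = {x. norm (x - x0) \<le> t \<and> norm (blinfun_apply Finv (F x)) \<le> f t + \<epsilon>}"

definition Nclass :: "('a::banach \<Rightarrow> 'b::banach) \<Rightarrow> ('a \<Rightarrow> ('a \<Rightarrow>\<^sub>L 'b)) \<Rightarrow> ('b \<Rightarrow>\<^sub>L 'a) \<Rightarrow> 'a \<Rightarrow> real \<Rightarrow> real \<Rightarrow> ('a \<Rightarrow> 'a) set" where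
  "Nclass F F' Finv x0 tb \<theta> = {N. \<forall>x\<in>ball x0 tb.
     norm (blinfun_apply Finv (F x + blinfun_apply (F' x) (N x - x))) \<le> \<theta> * norm (blinfun_apply Finv (F x))}"

end

theory Submission
  imports Defs
begin

text \<open>
The scalar pairs (t_k, \<epsilon>_k) majorize the iterates: by induction y_k \<in> K(t_k, \<epsilon>_k),
(t_k, \<epsilon>_k) \<in> \<Omega> and ||y_{k+1} - y_k|| \<le> t_{k+1} - t_k. The heart of the matter is the
scalar step: for h = t_{k+1} - t_k the linearization error f(t + h) - f(t) - f'(t) h is at
most (1 - \<theta>)^2 (f(t) + \<epsilon>)/2, because f(s) + \<kappa> s has infimum 0 on [0, \<lambda>), so the convex
function f' climbs from f'(t) to below -\<kappa> only over a long interval, which bounds its slope.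
Hence f(t_k) + \<epsilon>_k decays geometrically and y_k converges to a zero x_* of F. As f is
decreasing on [0, \<lambda>) and -f(||x - x_0||) \<le> ||F'(x_0)^{-1} F(x)||, both x_* and every zero in
B(x_0, \<tau>bar) lie in B[x_0, t_*], where F'(x_0) dominates the variation of F since f'(t_* ) < 0;
this gives uniqueness. The rates come from one Newton step at y_k linearized towards x_*.
\<close>

lemma le_of_forall_small_perturbation:
  fixes E u A c :: real
  assumes "0 \<le> E" "0 < c" "\<And>\<delta>. 0 < \<delta> \<Longrightarrow> \<delta> \<le> c \<Longrightarrow> E * (u - \<delta>) \<le> A"
  shows "E * u \<le> A"
proof (rule ccontr)
  assume "\<not> E * u \<le> A"
  then have gt: "A < E * u" by simp
  then have E: "0 < E" using assms(3)[of c] assms(1,2) by (cases "E = 0") auto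
  define \<delta> where "\<delta> = min c ((E * u - A) / (2 * E))"
  have \<delta>: "0 < \<delta>" "\<delta> \<le> c" using E gt assms(2) by (auto simp: \<delta>_def)
  have "E * \<delta> \<le> E * ((E * u - A) / (2 * E))" using E by (intro mult_left_mono) (auto simp: \<delta>_def)
  also have "\<dots> = (E * u - A) / 2" using E by simp
  finally have "A < E * (u - \<delta>)" using gt by (simp add: algebra_simps)
  with assms(3)[OF \<delta>] show False by simp
qed

lemma continuous_on_le_at_limit_from_left:
  fixes \<phi> :: "real \<Rightarrow> real"
  assumes "continuous_on {0..<R} \<phi>" "0 < a" "a < R" "\<And>s. 0 \<le> s \<Longrightarrow> s < a \<Longrightarrow> \<phi> s \<le> c"
  shows "\<phi> a \<le> c"
proof (rule ccontr)
  assume "\<not> \<phi> a \<le> c"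
  then have e: "0 < \<phi> a - c" by simp
  obtain d where d: "d > 0" "\<forall>x'\<in>{0..<R}. dist x' a < d \<longrightarrow> dist (\<phi> x') (\<phi> a) < \<phi> a - c"
    using assms(1) e assms(2,3) unfolding continuous_on_iff by (metis atLeastLessThan_iff less_imp_le)
  define s where "s = max 0 (a - d/2)"
  have s: "0 \<le> s" "s < a" "s < R" "dist s a < d" using d assms by (auto simp: s_def dist_real_def)
  then have "dist (\<phi> s) (\<phi> a) < \<phi> a - c" using d by auto
  then have "\<phi> s > c" by (auto simp: dist_real_def)
  with assms(4)[OF s(1,2)] show False by simp
qed

lemma chord_slope_le_left_deriv:
  fixes \<phi> :: "real \<Rightarrow> real"
  assumes cv: "convex_on {a..c} \<phi>" and xy: "a \<le> x" "x < y" "y \<le> b" "b < c"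
  shows "(\<phi> y - \<phi> x) / (y - x) \<le> left_deriv \<phi> b"
proof -
  define Q where "Q s = (\<phi> s - \<phi> b) / (s - b)" for s
  have Q_mono: "Q s1 \<le> Q s2" if "x \<le> s1" "s1 \<le> s2" "s2 < b" for s1 s2
    using convex_on_slope_le(2)[OF cv, of s1 b s2] that xy unfolding Q_def
    by (cases "s1 = s2") auto
  have Q_bounded: "Q s \<le> (\<phi> b - \<phi> c) / (b - c)" if "x \<le> s" "s < b" for s
  proof -
    have "Q s \<le> (\<phi> s - \<phi> c) / (s - c)"
      using convex_on_slope_le(1)[OF cv, of s c b] that xy unfolding Q_def by auto
    also have "\<dots> \<le> (\<phi> b - \<phi> c) / (b - c)"
      using convex_on_slope_le(2)[OF cv, of s c b] that xy by auto
    finally show ?thesis .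
  qed
  have bdd: "bdd_above (Q ` {x..<b})" using Q_bounded by (intro bdd_aboveI2) auto
  have ne: "{x..<b} \<noteq> {}" using xy by auto
  define L where "L = (SUP s\<in>{x..<b}. Q s)"
  have "(Q \<longlongrightarrow> L) (at_left b)"
  proof (rule order_tendstoI)
    fix l assume "l < L"
    then obtain s0 where s0: "s0 \<in> {x..<b}" "l < Q s0" using less_cSUP_iff[OF ne bdd] L_def by auto
    have "eventually (\<lambda>s. s \<in> {s0<..<b}) (at_left b)" using s0 by (intro eventually_at_left_real) auto
    then show "eventually (\<lambda>s. l < Q s) (at_left b)"
    proof eventually_elim
      case (elim s)
      then show ?case using s0 Q_mono[of s0 s] by auto
    qed
  next
    fix l assume "L < l"
    have "eventually (\<lambda>s. s \<in> {x<..<b}) (at_left b)" using ne by (intro eventually_at_left_real) auto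
    then show "eventually (\<lambda>s. Q s < l) (at_left b)"
    proof eventually_elim
      case (elim s)
      then have "Q s \<le> L" unfolding L_def using bdd by (intro cSUP_upper) auto
      then show ?case using \<open>L < l\<close> by simp
    qed
  qed
  then have "left_deriv \<phi> b = L" unfolding left_deriv_def Q_def by (rule tendsto_Lim[rotated]) simp
  moreover have "Q x \<le> L" unfolding L_def using ne bdd by (intro cSUP_upper) auto
  moreover have "Q x = (\<phi> b - \<phi> x) / (b - x)"
    unfolding Q_def using minus_divide_divide[of "\<phi> b - \<phi> x" "b - x"] by simp
  moreover have "(\<phi> y - \<phi> x) / (y - x) \<le> (\<phi> b - \<phi> x) / (b - x)"
  proof (cases "y = b")
    case False
    then show ?thesis using convex_on_slope_le(1)[OF cv, of x b y] xy
      minus_divide_divide[of "\<phi> b - \<phi> x" "b - x"] minus_divide_divide[of "\<phi> y - \<phi> x" "y - x"]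
      by simp
  qed simp
  ultimately show ?thesis by simp
qed

lemma majorized_sequence_converges:
  fixes y :: "nat \<Rightarrow> 'a::banach" and t :: "nat \<Rightarrow> real"
  assumes steps: "\<And>k. norm (y (Suc k) - y k) \<le> t (Suc k) - t k" and t: "t \<longlonglongrightarrow> T"
  obtains x where "y \<longlonglongrightarrow> x" "\<And>k. norm (x - y k) \<le> T - t k"
proof -
  have tele: "norm (y m - y k) \<le> t m - t k" if "k \<le> m" for k m
    using that
  proof (induction m rule: dec_induct)
    case (step m)
    have "norm (y (Suc m) - y k) \<le> norm (y (Suc m) - y m) + norm (y m - y k)"
      using norm_triangle_ineq[of "y (Suc m) - y m" "y m - y k"] by simp
    then show ?case using steps[of m] step.IH by simp
  qed simp
  have "dist (y m) (y n) \<le> dist (t m) (t n)" for m n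
    using tele[of m n] tele[of n m] by (cases "m \<le> n") (auto simp: dist_norm norm_minus_commute)
  then have "Cauchy y"
    using LIMSEQ_imp_Cauchy[OF t] unfolding Cauchy_def by (meson le_less_trans)
  then obtain x where x: "y \<longlonglongrightarrow> x" using Cauchy_convergent_iff convergent_def by blast
  have "norm (x - y k) \<le> T - t k" for k
    by (rule LIMSEQ_le[OF tendsto_norm[OF tendsto_diff[OF x tendsto_const]] tendsto_diff[OF t tendsto_const]])
      (use tele in blast)
  with x that show ?thesis by blast
qed

lemma rate_bound_by_left_deriv:
  fixes Dl D S L e E \<theta> :: real
  assumes "0 < Dl" "Dl \<le> D" "0 \<le> S" "S \<le> L * e" "0 \<le> e" "0 \<le> \<theta>"
    and "D * E \<le> (1 + \<theta>) * (S * e / 2) + \<theta> * ((2 - D) * e)"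
  shows "E \<le> ((1 + \<theta>) / 2 * (L / Dl) * e + \<theta> * ((2 - Dl) / Dl)) * e"
proof -
  have D: "0 < D" using assms by simp
  have "E \<le> ((1 + \<theta>) * (S * e / 2) + \<theta> * ((2 - D) * e)) / D"
    using assms(7) by (simp only: pos_le_divide_eq[OF D] mult.commute[of E D])
  also have "\<dots> = (1 + \<theta>) * (S * e / 2) / D + \<theta> * ((2 - D) / D) * e"
    using D by (simp add: field_simps)
  also have "(1 + \<theta>) * (S * e / 2) / D \<le> (1 + \<theta>) * (L * e * e / 2) / Dl"
    using assms by (intro frac_le mult_left_mono mult_right_mono divide_right_mono) auto
  also have "(2 - D) / D \<le> (2 - Dl) / Dl"
  proof -
    have "(2 - D) / D = 2 / D - 1" and "(2 - Dl) / Dl = 2 / Dl - 1" using D assms(1) by (auto simp: field_simps)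
    moreover have "2 / D \<le> 2 / Dl" using assms by (intro divide_left_mono) auto
    ultimately show ?thesis by simp
  qed
  then have "\<theta> * ((2 - D) / D) * e \<le> \<theta> * ((2 - Dl) / Dl) * e"
    using assms by (intro mult_right_mono mult_left_mono) auto
  finally show ?thesis by (simp add: algebra_simps)
qed

lemma rate_bound_by_kappa:
  fixes k D S e E \<theta> :: real
  assumes "0 < k" "k \<le> D" "0 \<le> S" "S \<le> D" "0 \<le> e" "0 \<le> \<theta>"
    and "D * E \<le> (1 + \<theta>) * (S * e / 2) + \<theta> * ((2 - D) * e)"
  shows "E \<le> ((1 + \<theta>) / 2 + 2 * \<theta> / k) * e"
proof -
  have D: "0 < D" using assms by simp
  have "E \<le> ((1 + \<theta>) * (S * e / 2) + \<theta> * ((2 - D) * e)) / D"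
    using assms(7) by (simp only: pos_le_divide_eq[OF D] mult.commute[of E D])
  also have "\<dots> = (1 + \<theta>) / 2 * e * (S / D) + \<theta> * e * ((2 - D) / D)"
    using D by (simp add: field_simps)
  also have "(1 + \<theta>) / 2 * e * (S / D) \<le> (1 + \<theta>) / 2 * e * 1"
    using assms D by (intro mult_left_mono) auto
  also have "(2 - D) / D \<le> 2 / k"
    using assms D by (intro order_trans[OF divide_right_mono[of "2 - D" 2 D]] divide_left_mono) auto
  then have "\<theta> * e * ((2 - D) / D) \<le> \<theta> * e * (2 / k)" using assms by (intro mult_left_mono) auto
  finally show ?thesis by (simp add: algebra_simps)
qed

section \<open>Majorant functions\<close>

locale majorant_function =
  fixes f f' :: "real \<Rightarrow> real" and R :: real
  assumes f_deriv: "\<forall>s\<in>{0..<R}. (f has_real_derivative f' s) (at s within {0..<R})"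
    and f'_cont: "continuous_on {0..<R} f'"
    and h1: "f 0 > 0" "f' 0 = -1"
    and h2: "strict_mono_on {0..<R} f'" "convex_on {0..<R} f'"
    and h3: "\<exists>s\<in>{0<..<R}. f s < 0"
begin

abbreviation "kap \<equiv> kappa f R"
abbreviation "lam \<equiv> lambda f f' R"

definition lin_err :: "real \<Rightarrow> real \<Rightarrow> real" where
  "lin_err t h = f (t + h) - f t - f' t * h"

lemma R_pos: "0 < R"
  using h3 by auto

lemma f'_less: "0 \<le> a \<Longrightarrow> a < b \<Longrightarrow> b < R \<Longrightarrow> f' a < f' b"
  using h2(1) by (auto simp: strict_mono_on_def)

lemma f'_le: "0 \<le> a \<Longrightarrow> a \<le> b \<Longrightarrow> b < R \<Longrightarrow> f' a \<le> f' b"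
  using f'_less by (cases "a = b") (auto simp: less_imp_le)

lemma f'_ge_minus_one: "0 \<le> s \<Longrightarrow> s < R \<Longrightarrow> -1 \<le> f' s"
  using f'_le[of 0 s] h1 by simp

lemma f_has_derivative_at: "0 < s \<Longrightarrow> s < R \<Longrightarrow> (f has_real_derivative f' s) (at s)"
proof -
  assume "0 < s" "s < R"
  then have "at s within {0..<R} = at s" by (intro at_within_interior) simp
  moreover have "(f has_real_derivative f' s) (at s within {0..<R})"
    using f_deriv \<open>0 < s\<close> \<open>s < R\<close> by auto
  ultimately show ?thesis by simp
qed

lemma continuous_on_f: "continuous_on {0..<R} f"
  unfolding continuous_on_eq_continuous_within using f_deriv DERIV_continuous by blast

lemma continuous_on_f_shifted:
  "0 \<le> a \<Longrightarrow> 0 \<le> t \<Longrightarrow> t + h < R \<Longrightarrow> continuous_on {a..h} (\<lambda>r. f (t + r))"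
  by (intro continuous_on_compose2[OF continuous_on_f]) (auto intro!: continuous_intros)

lemma f_shifted_has_derivative:
  "0 \<le> t \<Longrightarrow> 0 < r \<Longrightarrow> t + r < R \<Longrightarrow> ((\<lambda>r. f (t + r)) has_real_derivative f' (t + r)) (at r)"
proof -
  assume as: "0 \<le> t" "0 < r" "t + r < R"
  have "(f has_real_derivative f' (t + r)) (at (t + r))" using f_has_derivative_at as by auto
  moreover have "((\<lambda>r. t + r) has_real_derivative 1) (at r)" by (auto intro!: derivative_eq_intros)
  ultimately show ?thesis using DERIV_chain2[where g = "\<lambda>r. t + r"] by fastforce
qed

lemma f_mean_value:
  assumes "0 \<le> a" "a < b" "b < R"
  obtains c where "a < c" "c < b" "f b - f a = (b - a) * f' c"
proof -
  have "continuous_on {a..b} f" using assms by (auto intro: continuous_on_subset[OF continuous_on_f])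
  moreover have "f differentiable (at x)" if "a < x" "x < b" for x
    using f_has_derivative_at[of x] that assms unfolding real_differentiable_def by auto
  ultimately obtain l c where c: "a < c" "c < b" "DERIV f c :> l" "f b - f a = (b - a) * l"
    using MVT[OF \<open>a < b\<close>] by blast
  have "l = f' c" using DERIV_unique[OF c(3) f_has_derivative_at] c assms by auto
  with c that show ?thesis by blast
qed

lemma f_ge_tangent: "0 \<le> a \<Longrightarrow> a \<le> b \<Longrightarrow> b < R \<Longrightarrow> f a + f' a * (b - a) \<le> f b"
proof (cases "a = b")
  case False
  assume ab: "0 \<le> a" "a \<le> b" "b < R"
  then obtain c where c: "a < c" "c < b" "f b - f a = (b - a) * f' c"
    using False by (elim f_mean_value) auto
  have "(b - a) * f' a \<le> (b - a) * f' c" using f'_le c ab by (intro mult_left_mono) auto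
  then show ?thesis using c by (simp add: algebra_simps)
qed simp

lemma f_le_tangent: "0 \<le> a \<Longrightarrow> a \<le> b \<Longrightarrow> b < R \<Longrightarrow> f b \<le> f a + f' b * (b - a)"
proof (cases "a = b")
  case False
  assume ab: "0 \<le> a" "a \<le> b" "b < R"
  then obtain c where c: "a < c" "c < b" "f b - f a = (b - a) * f' c"
    using False by (elim f_mean_value) auto
  have "(b - a) * f' c \<le> (b - a) * f' b" using f'_le c ab by (intro mult_left_mono) auto
  then show ?thesis using c by (simp add: algebra_simps)
qed simp

lemma f'_le_chord:
  assumes "0 \<le> a" "a < s" "s < R" "0 \<le> r" "r \<le> s - a"
  shows "f' (a + r) \<le> f' a + r * ((f' s - f' a) / (s - a))"
proof -
  define u where "u = r / (s - a)"
  have u: "0 \<le> u" "u \<le> 1" "u * (s - a) = r" using assms by (auto simp: u_def field_simps)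
  have "f' ((1 - u) *\<^sub>R a + u *\<^sub>R s) \<le> (1 - u) * f' a + u * f' s"
    using convex_onD[OF h2(2)] u assms by auto
  moreover have "(1 - u) *\<^sub>R a + u *\<^sub>R s = a + r" using u by (simp add: algebra_simps)
  moreover have "(1 - u) * f' a + u * f' s = f' a + r * ((f' s - f' a) / (s - a))"
    by (simp add: u_def algebra_simps add_divide_distrib diff_divide_distrib)
  ultimately show ?thesis by simp
qed

lemma f'_increment_mono:
  assumes "0 \<le> \<rho>" "\<rho> \<le> t" "0 \<le> r" "t + r < R"
  shows "f' (\<rho> + r) - f' \<rho> \<le> f' (t + r) - f' t"
proof (cases "\<rho> = t \<or> r = 0")
  case False
  then have "\<rho> < t" "0 < r" using assms by auto
  define X where "X = (f' (t + r) - f' \<rho>) / (t + r - \<rho>)"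
  have "f' (\<rho> + r) \<le> f' \<rho> + r * X"
    using f'_le_chord[of \<rho> "t + r" r] assms \<open>\<rho> < t\<close> by (auto simp: X_def)
  moreover have "f' (\<rho> + (t - \<rho>)) \<le> f' \<rho> + (t - \<rho>) * X"
    using f'_le_chord[of \<rho> "t + r" "t - \<rho>"] assms \<open>\<rho> < t\<close> \<open>0 < r\<close> by (auto simp: X_def)
  moreover have "r * X + (t - \<rho>) * X = (t + r - \<rho>) * X" by (simp add: algebra_simps)
  moreover have "(t + r - \<rho>) * X = f' (t + r) - f' \<rho>" using \<open>\<rho> < t\<close> \<open>0 < r\<close> by (simp add: X_def)
  ultimately show ?thesis by simp
qed auto

lemma lin_err_le_of_f'_le:
  assumes "0 \<le> t" "0 \<le> h" "t + h < R" "\<And>r. 0 \<le> r \<Longrightarrow> r \<le> h \<Longrightarrow> f' (t + r) \<le> f' t + c * r"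
  shows "lin_err t h \<le> c * h\<^sup>2 / 2"
proof -
  define \<phi> where "\<phi> r = c * r\<^sup>2 / 2 - lin_err t r" for r
  have "\<phi> 0 \<le> \<phi> h"
  proof (rule DERIV_nonneg_imp_increasing_open[OF \<open>0 \<le> h\<close>])
    show "continuous_on {0..h} \<phi>" unfolding \<phi>_def lin_err_def
      using assms by (intro continuous_intros continuous_on_f_shifted) auto
    fix x assume x: "0 < x" "x < h"
    have "(\<phi> has_real_derivative c * x - f' (t + x) + f' t) (at x)"
      unfolding \<phi>_def lin_err_def using x assms
      by (auto intro!: derivative_eq_intros f_shifted_has_derivative simp: power2_eq_square)
    moreover have "0 \<le> c * x - f' (t + x) + f' t" using assms(4)[of x] x by auto
    ultimately show "\<exists>y. DERIV \<phi> x :> y \<and> 0 \<le> y" by blast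
  qed
  then show ?thesis by (simp add: \<phi>_def lin_err_def)
qed

lemma lin_err_le_half_slope:
  assumes "0 \<le> t" "0 \<le> h" "t + h < R"
  shows "lin_err t h \<le> (f' (t + h) - f' t) * h / 2"
proof (cases "h = 0")
  case False
  then have "lin_err t h \<le> (f' (t + h) - f' t) / h * h\<^sup>2 / 2"
    using assms f'_le_chord[of t "t + h"] by (intro lin_err_le_of_f'_le) (auto simp: mult.commute)
  then show ?thesis using False by (simp add: power2_eq_square)
qed (simp add: lin_err_def)

lemma lin_err_pos: "0 \<le> t \<Longrightarrow> 0 < h \<Longrightarrow> t + h < R \<Longrightarrow> 0 < lin_err t h"
proof -
  assume as: "0 \<le> t" "0 < h" "t + h < R"
  then obtain c where c: "t < c" "c < t + h" "f (t + h) - f t = h * f' c"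
    by (elim f_mean_value[of t "t + h"]) auto
  have "h * f' t < h * f' c" using f'_less c as by auto
  then show ?thesis using c by (simp add: lin_err_def algebra_simps)
qed

lemma lin_err_mono:
  assumes "0 \<le> \<rho>" "\<rho> \<le> t" "0 \<le> a" "a \<le> h" "t + h < R"
  shows "lin_err \<rho> a \<le> lin_err t h"
proof -
  have "lin_err \<rho> a \<le> lin_err \<rho> h"
  proof (rule DERIV_nonneg_imp_increasing_open[OF \<open>a \<le> h\<close>])
    show "continuous_on {a..h} (lin_err \<rho>)" unfolding lin_err_def
      using assms by (intro continuous_intros continuous_on_f_shifted) auto
    fix x assume x: "a < x" "x < h"
    have "(lin_err \<rho> has_real_derivative f' (\<rho> + x) - f' \<rho>) (at x)"
      unfolding lin_err_def using x assms by (auto intro!: derivative_eq_intros f_shifted_has_derivative)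
    moreover have "0 \<le> f' (\<rho> + x) - f' \<rho>" using f'_le[of \<rho> "\<rho> + x"] x assms by auto
    ultimately show "\<exists>y. DERIV (lin_err \<rho>) x :> y \<and> 0 \<le> y" by blast
  qed
  also have "lin_err \<rho> h \<le> lin_err t h"
  proof -
    define \<phi> where "\<phi> r = lin_err t r - lin_err \<rho> r" for r
    have "\<phi> 0 \<le> \<phi> h"
    proof (rule DERIV_nonneg_imp_increasing_open[of 0 h \<phi>])
      show "continuous_on {0..h} \<phi>" unfolding \<phi>_def lin_err_def
        using assms by (intro continuous_intros continuous_on_f_shifted) auto
      fix x assume x: "0 < x" "x < h"
      have "(\<phi> has_real_derivative (f' (t + x) - f' t) - (f' (\<rho> + x) - f' \<rho>)) (at x)"
        unfolding \<phi>_def lin_err_def using x assms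
        by (auto intro!: derivative_eq_intros f_shifted_has_derivative)
      moreover have "0 \<le> (f' (t + x) - f' t) - (f' (\<rho> + x) - f' \<rho>)"
        using f'_increment_mono[of \<rho> t x] x assms by auto
      ultimately show "\<exists>y. DERIV \<phi> x :> y \<and> 0 \<le> y" by blast
    qed (use assms in auto)
    then show ?thesis by (simp add: \<phi>_def lin_err_def)
  qed
  finally show ?thesis .
qed

lemma bdd_above_kappa_quotients: "bdd_above ((\<lambda>t. - f t / t) ` {0<..<R})"
proof (rule bdd_aboveI2[where M = 1])
  fix t :: real assume t: "t \<in> {0<..<R}"
  then have "- f t \<le> t" using f_ge_tangent[of 0 t] h1 by auto
  then show "- f t / t \<le> 1" using t by (auto simp: divide_simps)
qed

lemma kappa_ge: "0 < s \<Longrightarrow> s < R \<Longrightarrow> - f s / s \<le> kap"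
  unfolding kappa_def by (rule cSUP_upper[OF _ bdd_above_kappa_quotients]) auto

lemma kappa_le: "(\<And>s. 0 < s \<Longrightarrow> s < R \<Longrightarrow> - f s / s \<le> c) \<Longrightarrow> kap \<le> c"
  unfolding kappa_def using R_pos by (intro cSUP_least) auto

lemma kappa_pos: "0 < kap"
proof -
  obtain s where s: "0 < s" "s < R" "f s < 0" using h3 by auto
  then have "0 < - f s / s" by (simp add: divide_neg_pos)
  also have "\<dots> \<le> kap" using kappa_ge s by auto
  finally show ?thesis .
qed

lemma kappa_less_one: "kap < 1"
proof -
  have "kap \<le> 1 - f 0 / R"
  proof (rule kappa_le)
    fix s assume s: "0 < s" "s < R"
    then have "- f s / s \<le> (s - f 0) / s" using f_ge_tangent[of 0 s] h1 by (intro divide_right_mono) auto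
    also have "\<dots> = 1 - f 0 / s" using s by (simp add: field_simps)
    also have "\<dots> \<le> 1 - f 0 / R" using s h1 by (simp add: frac_le)
    finally show "- f s / s \<le> 1 - f 0 / R" .
  qed
  moreover have "0 < f 0 / R" using h1 R_pos by auto
  ultimately show ?thesis by simp
qed

lemma lambda_le_R: "lam \<le> R"
  unfolding lambda_def using R_pos h1 kappa_less_one by (intro cSup_least) auto

lemma lambda_ge: "0 \<le> t \<Longrightarrow> t < R \<Longrightarrow> kap + f' t < 0 \<Longrightarrow> t \<le> lam"
  unfolding lambda_def by (rule cSup_upper) (auto intro: bdd_aboveI[where M = R])

lemma kappa_plus_f'_neg: "0 \<le> t \<Longrightarrow> t < lam \<Longrightarrow> kap + f' t < 0"
proof -
  assume t: "0 \<le> t" "t < lam"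
  have "{t \<in> {0..<R}. kap + f' t < 0} \<noteq> {}" using R_pos h1 kappa_less_one by auto
  then obtain s where s: "s \<in> {t \<in> {0..<R}. kap + f' t < 0}" "t < s"
    using less_cSupD[of "{t \<in> {0..<R}. kap + f' t < 0}" t] t unfolding lambda_def by blast
  then show ?thesis using f'_le[of t s] t by auto
qed

lemma less_lambda_imp_less_R: "t < lam \<Longrightarrow> t < R"
  using lambda_le_R by auto

lemma f'_neg_below_lambda: "0 \<le> t \<Longrightarrow> t < lam \<Longrightarrow> f' t < 0"
  using kappa_plus_f'_neg kappa_pos by fastforce

lemma lambda_pos: "0 < lam"
proof -
  obtain d where d: "d > 0" "\<forall>x\<in>{0..<R}. dist x 0 < d \<longrightarrow> dist (f' x) (f' 0) < 1 - kap"
    using f'_cont kappa_less_one R_pos unfolding continuous_on_iff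
    by (metis atLeastLessThan_iff diff_gt_0_iff_gt order_refl)
  define s where "s = min (d/2) (R/2)"
  have s: "0 < s" "s < R" "dist s 0 < d" using d R_pos by (auto simp: s_def dist_real_def)
  then have "kap + f' s < 0" using d h1 by (auto simp: dist_real_def)
  then have "s \<le> lam" using lambda_ge s by auto
  then show ?thesis using s by auto
qed

lemma lambda_le_tbar: "lam \<le> tbar f' R"
  unfolding lambda_def tbar_def using R_pos h1 kappa_less_one kappa_pos
  by (intro cSup_subset_mono) (auto intro!: bdd_aboveI[where M = R])

lemma f'_lambda_le: "lam < R \<Longrightarrow> f' lam \<le> - kap"
  using continuous_on_le_at_limit_from_left[OF f'_cont lambda_pos, of "- kap"] kappa_plus_f'_neg
  by force

lemma f_plus_kappa_antimono: "0 \<le> a \<Longrightarrow> a \<le> b \<Longrightarrow> b < lam \<Longrightarrow> f b + kap * b \<le> f a + kap * a"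
proof (cases "a = b")
  case False
  assume ab: "0 \<le> a" "a \<le> b" "b < lam"
  then obtain c where c: "a < c" "c < b" "f b - f a = (b - a) * f' c"
    using False less_lambda_imp_less_R by (elim f_mean_value) auto
  have "(b - a) * (kap + f' c) \<le> 0"
    using kappa_plus_f'_neg[of c] c ab by (simp add: mult_nonneg_nonpos)
  then show ?thesis using c by (simp add: algebra_simps)
qed simp

lemma f_plus_kappa_mono: "lam \<le> a \<Longrightarrow> a \<le> b \<Longrightarrow> b < R \<Longrightarrow> f a + kap * a \<le> f b + kap * b"
proof (rule DERIV_nonneg_imp_increasing_open[of a b "\<lambda>s. f s + kap * s"])
  assume ab: "lam \<le> a" "a \<le> b" "b < R"
  show "continuous_on {a..b} (\<lambda>s. f s + kap * s)"
    using ab lambda_pos by (intro continuous_on_subset[OF continuous_on_f] continuous_intros) auto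
  fix x assume x: "a < x" "x < b"
  then have "((\<lambda>s. f s + kap * s) has_real_derivative f' x + kap) (at x)"
    using ab lambda_pos by (auto intro!: derivative_eq_intros f_has_derivative_at)
  moreover have "0 \<le> f' x + kap" using lambda_ge[of x] x ab lambda_pos by force
  ultimately show "\<exists>y. DERIV (\<lambda>s. f s + kap * s) x :> y \<and> 0 \<le> y" by blast
qed

lemma f_plus_kappa_small_below_lambda:
  assumes "0 < \<delta>" "0 \<le> t" "t < lam"
  obtains s where "t \<le> s" "s < lam" "f s + kap * s < \<delta>"
proof -
  have "\<exists>s. t \<le> s \<and> s < lam \<and> f s + kap * s < \<delta>"
  proof (rule ccontr)
    assume "\<nexists>s. t \<le> s \<and> s < lam \<and> f s + kap * s < \<delta>"
    then have above_t: "\<delta> \<le> f s + kap * s" if "t \<le> s" "s < lam" for s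
      using that by force
    have below_lambda: "\<delta> \<le> f s + kap * s" if "0 \<le> s" "s < lam" for s
      using above_t[of s] above_t[of t] f_plus_kappa_antimono[of s t] that assms by (cases "t \<le> s") auto
    have "\<delta> \<le> f s + kap * s" if "0 < s" "s < R" for s
    proof (cases "s < lam")
      case False
      then have "lam < R" using that by auto
      have "(\<lambda>s. - (f s + kap * s)) lam \<le> - \<delta>"
        by (rule continuous_on_le_at_limit_from_left[where a = lam])
          (use below_lambda lambda_pos \<open>lam < R\<close> in \<open>auto intro!: continuous_intros continuous_on_f, force\<close>)
      then show ?thesis using f_plus_kappa_mono[of lam s] False that by auto
    qed (use below_lambda that in auto)
    note above = this
    have "kap \<le> kap - \<delta> / R"
    proof (rule kappa_le)
      fix s assume s: "0 < s" "s < R"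
      have "\<delta> / R \<le> \<delta> / s" using s assms by (intro divide_left_mono) auto
      also have "\<dots> \<le> (f s + kap * s) / s" using above[OF s] s by (intro divide_right_mono) auto
      also have "\<dots> = f s / s + kap" using s by (simp add: field_simps)
      finally show "- f s / s \<le> kap - \<delta> / R" by simp
    qed
    moreover have "0 < \<delta> / R" using assms R_pos by auto
    ultimately show False by simp
  qed
  then show ?thesis using that by blast
qed

lemma Theta_bound: "0 \<le> \<theta> \<Longrightarrow> \<theta> \<le> Theta f R \<Longrightarrow> \<theta> * (2 - kap) \<le> kap"
  unfolding Theta_def using kappa_less_one by (simp add: field_simps)

lemma Theta_less_one: "0 \<le> \<theta> \<Longrightarrow> \<theta> \<le> Theta f R \<Longrightarrow> \<theta> < 1"
  using Theta_bound[of \<theta>] kappa_less_one kappa_pos by (smt (verit) mult_le_cancel_left1)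

lemma f_plus_kappa_decrement_le:
  assumes "0 \<le> t" "t \<le> s" "s < lam"
  shows "(f t + kap * t) - (f s + kap * s) \<le> (s - t) * (- f' t - kap)"
proof (cases "s = t")
  case False
  then obtain c where c: "t < c" "c < s" "f s - f t = (s - t) * f' c"
    using assms less_lambda_imp_less_R by (elim f_mean_value) auto
  have "(s - t) * (- f' c - kap) \<le> (s - t) * (- f' t - kap)"
    using c assms f'_le[of t c] less_lambda_imp_less_R[of s] by (intro mult_left_mono) auto
  then show ?thesis using c by (simp add: algebra_simps)
qed simp

lemma far_point_below_lambda:
  assumes "0 < \<delta>" "0 \<le> t" "t < lam" "U \<le> f t + kap * t"
  obtains s where "t \<le> s" "s < lam" "U - \<delta> < (s - t) * (- f' t - kap)"
proof -
  obtain s where "t \<le> s" "s < lam" "f s + kap * s < \<delta>"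
    using f_plus_kappa_small_below_lambda assms(1-3) by blast
  with that show ?thesis using f_plus_kappa_decrement_le[of t s] assms by fastforce
qed

lemma lin_err_le_chord_slope:
  assumes "0 \<le> t" "0 \<le> h" "t + h < s" "s < lam"
  shows "lin_err t h \<le> (- f' t - kap) / (s - t) * h\<^sup>2 / 2"
proof (rule lin_err_le_of_f'_le)
  fix r assume r: "0 \<le> r" "r \<le> h"
  have "f' (t + r) \<le> f' t + r * ((f' s - f' t) / (s - t))"
    using f'_le_chord[of t s r] r assms less_lambda_imp_less_R by auto
  also have "\<dots> \<le> f' t + r * ((- f' t - kap) / (s - t))"
    using r assms kappa_plus_f'_neg[of s] by (intro add_left_mono mult_left_mono divide_right_mono) auto
  finally show "f' (t + r) \<le> f' t + (- f' t - kap) / (s - t) * r" by (simp add: mult.commute)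
qed (use assms less_lambda_imp_less_R in auto)

lemma step_contraction_factor:
  assumes \<theta>: "0 \<le> \<theta>" "\<theta> \<le> Theta f R" and d: "kap < d" "d \<le> 1"
  shows "0 < (1 + \<theta>) * (d - kap) / d" "(1 + \<theta>) * (d - kap) / d < 1"
    and "(1 + \<theta>) * (d - kap) / d \<le> 1 - \<theta>"
proof -
  have "0 < d" using d kappa_pos by simp
  have \<theta>\<kappa>: "\<theta> * (2 - kap) \<le> kap" using Theta_bound \<theta> by auto
  show "0 < (1 + \<theta>) * (d - kap) / d" using \<theta> d \<open>0 < d\<close> by simp
  have "\<theta> * d \<le> \<theta>" using mult_left_le[OF d(2) \<theta>(1)] .
  also have "\<theta> < kap * (1 + \<theta>)"
    using \<theta> \<theta>\<kappa> kappa_pos by (cases "\<theta> = 0") (auto simp: algebra_simps)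
  finally show "(1 + \<theta>) * (d - kap) / d < 1" using \<open>0 < d\<close> by (simp add: field_simps)
  have "(1 + \<theta>) * (d - kap) / d = (1 + \<theta>) * (1 - kap / d)" using \<open>0 < d\<close> by (simp add: field_simps)
  also have "\<dots> \<le> (1 + \<theta>) * (1 - kap)"
    using d \<open>0 < d\<close> kappa_pos \<theta> by (intro mult_left_mono) (auto simp: le_divide_eq)
  also have "\<dots> \<le> 1 - \<theta>" using \<theta>\<kappa> by (simp add: algebra_simps)
  finally show "(1 + \<theta>) * (d - kap) / d \<le> 1 - \<theta>" .
qed

lemma newton_scalar_step:
  assumes \<theta>: "0 \<le> \<theta>" "\<theta> \<le> Theta f R" and t: "0 \<le> t" "t < lam"
    and \<epsilon>: "\<epsilon> \<le> kap * t" and pos: "0 < f t + \<epsilon>"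
  defines "h \<equiv> (1 + \<theta>) * (f t + \<epsilon>) / (- f' t)"
  shows "0 < h" "t + h < lam" "lin_err t h \<le> (1 - \<theta>)\<^sup>2 * (f t + \<epsilon>) / 2"
proof -
  define U where "U = f t + \<epsilon>"
  define d where "d = - f' t"
  define c where "c = (1 + \<theta>) * (d - kap) / d"
  have dk: "kap < d" using kappa_plus_f'_neg[OF t] by (simp add: d_def)
  have d1: "d \<le> 1" using f'_ge_minus_one[of t] t less_lambda_imp_less_R by (simp add: d_def)
  have d: "0 < d" using dk kappa_pos by auto
  have "0 < U" using pos by (simp add: U_def)
  have "U \<le> f t + kap * t" using \<epsilon> by (simp add: U_def)
  have c: "0 < c" "c < 1" "c \<le> 1 - \<theta>"
    using step_contraction_factor[OF \<theta> dk d1] by (simp_all add: c_def)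
  have hc: "h * (d - kap) = c * U" using d by (simp add: h_def c_def U_def d_def)
  show "0 < h" using \<theta> \<open>0 < U\<close> d by (simp add: hc h_def U_def d_def[symmetric])
  \<comment> \<open>Points s < \<lambda> with f s + \<kappa> s small are far from t, beyond t + h.\<close>
  have far: "\<exists>s. t + h < s \<and> s < lam \<and> U - \<delta> < (s - t) * (d - kap)"
    if \<delta>: "0 < \<delta>" "\<delta> \<le> (1 - c) * U" for \<delta>
  proof -
    obtain s where s: "t \<le> s" "s < lam" "U - \<delta> < (s - t) * (d - kap)"
      using far_point_below_lambda[OF \<delta>(1) t \<open>U \<le> f t + kap * t\<close>] by (auto simp: d_def)
    have "h * (d - kap) < (s - t) * (d - kap)" using s(3) \<delta> hc by (simp add: algebra_simps)
    then have "h < s - t" using dk by simp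
    then show ?thesis using s by (intro exI[of _ s]) auto
  qed
  have "0 < (1 - c) * U" using c \<open>0 < U\<close> by simp
  then show "t + h < lam" using far by fastforce
  have hc': "(d - kap)\<^sup>2 * h\<^sup>2 = (c * U)\<^sup>2"
    using hc by (metis power_mult_distrib mult.commute)
  have "lin_err t h * U \<le> (d - kap)\<^sup>2 * h\<^sup>2 / 2"
  proof (rule le_of_forall_small_perturbation[OF _ \<open>0 < (1 - c) * U\<close>])
    show "0 \<le> lin_err t h"
      using lin_err_pos[of t h] \<open>0 < h\<close> \<open>t + h < lam\<close> t less_lambda_imp_less_R by simp
    fix \<delta> assume \<delta>: "0 < \<delta>" "\<delta> \<le> (1 - c) * U"
    then obtain s where s: "t + h < s" "s < lam" "U - \<delta> < (s - t) * (d - kap)" using far by blast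
    have "(1 - c) * U < U" using c \<open>0 < U\<close> by (simp add: algebra_simps)
    then have "0 < U - \<delta>" using \<delta> by linarith
    have st: "0 < s - t" using s \<open>0 < h\<close> by simp
    have "lin_err t h * (U - \<delta>) \<le> ((d - kap) / (s - t) * h\<^sup>2 / 2) * (U - \<delta>)"
      using lin_err_le_chord_slope[of t h s] t \<open>0 < h\<close> s \<open>0 < U - \<delta>\<close>
      by (intro mult_right_mono) (auto simp: d_def)
    also have "\<dots> \<le> ((d - kap) / (s - t) * h\<^sup>2 / 2) * ((s - t) * (d - kap))"
      using s(3) dk st by (intro mult_left_mono) auto
    also have "\<dots> = (d - kap)\<^sup>2 * h\<^sup>2 / 2" using st by (simp add: power2_eq_square field_simps)
    finally show "lin_err t h * (U - \<delta>) \<le> (d - kap)\<^sup>2 * h\<^sup>2 / 2" .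
  qed
  also have "(d - kap)\<^sup>2 * h\<^sup>2 / 2 = (c\<^sup>2 * U / 2) * U" using hc' by (simp add: power2_eq_square)
  finally have "lin_err t h \<le> c\<^sup>2 * U / 2" using \<open>0 < U\<close> by simp
  also have "c\<^sup>2 * U / 2 \<le> (1 - \<theta>)\<^sup>2 * U / 2"
    using c \<open>0 < U\<close> by (intro divide_right_mono mult_right_mono power_mono) auto
  finally show "lin_err t h \<le> (1 - \<theta>)\<^sup>2 * (f t + \<epsilon>) / 2" by (simp add: U_def)
qed

lemma n_theta_step:
  assumes \<theta>: "0 \<le> \<theta>" "\<theta> \<le> Theta f R" and te: "(t, \<epsilon>) \<in> Omega f f' R"
    and nt: "(t', \<epsilon>') = n_theta f f' \<theta> (t, \<epsilon>)"
  shows "(t', \<epsilon>') \<in> Omega f f' R" "t < t'" "\<epsilon> \<le> \<epsilon>'"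
    and "t' - t = (1 + \<theta>) * (f t + \<epsilon>) / (- f' t)"
    and "f t' + \<epsilon>' = \<theta> * (f t + \<epsilon>) + lin_err t (t' - t)"
    and "f t' + \<epsilon>' \<le> (1 + \<theta>\<^sup>2) / 2 * (f t + \<epsilon>)"
proof -
  have t: "0 \<le> t" "t < lam" and \<epsilon>: "0 \<le> \<epsilon>" "\<epsilon> \<le> kap * t" and pos: "0 < f t + \<epsilon>"
    using te by (auto simp: Omega_def)
  define h where "h = (1 + \<theta>) * (f t + \<epsilon>) / (- f' t)"
  note step = newton_scalar_step[OF \<theta> t \<epsilon>(2) pos, folded h_def]
  have d: "0 < - f' t" using f'_neg_below_lambda[OF t] by simp
  have t': "t' = t + h" and \<epsilon>': "\<epsilon>' = \<epsilon> + 2 * \<theta> * (f t + \<epsilon>)"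
    using nt by (simp_all add: n_theta_def h_def)
  show "t' - t = (1 + \<theta>) * (f t + \<epsilon>) / (- f' t)" using t' h_def by simp
  show "t < t'" using step t' by simp
  show "\<epsilon> \<le> \<epsilon>'" using \<epsilon>' \<theta> pos by simp
  have "f' t * h = - ((1 + \<theta>) * (f t + \<epsilon>))" using d by (simp add: h_def)
  then show eq: "f t' + \<epsilon>' = \<theta> * (f t + \<epsilon>) + lin_err t (t' - t)"
    using t' \<epsilon>' by (simp add: lin_err_def algebra_simps)
  then show "f t' + \<epsilon>' \<le> (1 + \<theta>\<^sup>2) / 2 * (f t + \<epsilon>)"
    using step t' by (simp add: power2_eq_square algebra_simps)
  have "0 < lin_err t h" using lin_err_pos[of t h] step t less_lambda_imp_less_R by auto
  then have "0 < f t' + \<epsilon>'" using eq t' \<theta> pos by (simp add: add_nonneg_pos)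
  have "2 * \<theta> \<le> kap * (1 + \<theta>)" using Theta_bound[OF \<theta>] by (simp add: algebra_simps)
  also have "\<dots> \<le> kap * (1 + \<theta>) / (- f' t)"
  proof -
    have "- f' t \<le> 1" using f'_ge_minus_one[of t] t less_lambda_imp_less_R by simp
    then have "kap * (1 + \<theta>) * (- f' t) \<le> kap * (1 + \<theta>)"
      using kappa_pos \<theta> by (intro mult_left_le) auto
    then show ?thesis by (simp only: pos_le_divide_eq[OF d])
  qed
  finally have "2 * \<theta> * (f t + \<epsilon>) \<le> kap * (1 + \<theta>) / (- f' t) * (f t + \<epsilon>)"
    using pos by (intro mult_right_mono) auto
  also have "\<dots> = kap * h" by (simp add: h_def)
  finally have "2 * \<theta> * (f t + \<epsilon>) \<le> kap * h" .
  then have "\<epsilon>' \<le> kap * t'" using t' \<epsilon>' \<epsilon> by (simp add: algebra_simps)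
  then show "(t', \<epsilon>') \<in> Omega f f' R"
    using step t' \<epsilon>' t \<epsilon> \<theta> pos \<open>0 < f t' + \<epsilon>'\<close> by (auto simp: Omega_def)
qed

lemma f_strict_antimono_below_lambda: "0 \<le> a \<Longrightarrow> a < b \<Longrightarrow> b < lam \<Longrightarrow> f b < f a"
proof -
  assume ab: "0 \<le> a" "a < b" "b < lam"
  then obtain c where c: "a < c" "c < b" "f b - f a = (b - a) * f' c"
    using less_lambda_imp_less_R by (elim f_mean_value) auto
  have "(b - a) * f' c < 0" using f'_neg_below_lambda[of c] c ab by (simp add: mult_pos_neg)
  then show ?thesis using c by simp
qed

lemma f_neg_below_lambda:
  obtains s where "0 \<le> s" "s < lam" "f s < 0"
proof -
  obtain s where s: "lam / 2 \<le> s" "s < lam" "f s + kap * s < kap * lam / 2"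
    using f_plus_kappa_small_below_lambda[of "kap * lam / 2" "lam / 2"] lambda_pos kappa_pos by auto
  have "kap * (lam / 2) \<le> kap * s" using s kappa_pos by (intro mult_left_mono) auto
  then have "f s < 0" using s by linarith
  moreover have "0 \<le> s" using s lambda_pos by linarith
  ultimately show ?thesis using that s by blast
qed

lemma tstar_zero: "0 \<le> tstar f R" "tstar f R < lam" "f (tstar f R) = 0"
proof -
  obtain s where s: "0 \<le> s" "s < lam" "f s < 0" by (rule f_neg_below_lambda)
  have "continuous_on {0..s} f"
    using s less_lambda_imp_less_R by (intro continuous_on_subset[OF continuous_on_f]) auto
  then obtain z where z: "0 \<le> z" "z \<le> s" "f z = 0"
    using IVT2'[of f s 0 0] s h1 by force
  have "tstar f R = z" unfolding tstar_def
  proof (rule cInf_eq_minimum)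
    show "z \<in> {t \<in> {0..<R}. f t = 0}" using z s less_lambda_imp_less_R by auto
    show "z \<le> x" if "x \<in> {t \<in> {0..<R}. f t = 0}" for x
      using f_strict_antimono_below_lambda[of x z] that z s by force
  qed
  then show "0 \<le> tstar f R" "tstar f R < lam" "f (tstar f R) = 0" using z s by auto
qed

lemma f_neg_above_tstar: "tstar f R < s \<Longrightarrow> s < lam \<Longrightarrow> f s < 0"
  using f_strict_antimono_below_lambda[of "tstar f R" s] tstar_zero by simp

lemma f'_tstar_neg: "f' (tstar f R) < 0"
  using f'_neg_below_lambda tstar_zero by simp

lemma tstar_less_taubar: "tstar f R < taubar f R"
proof -
  define s where "s = (tstar f R + lam) / 2"
  have s: "tstar f R < s" "s < lam" using tstar_zero by (auto simp: s_def)
  then have "s \<le> taubar f R"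
    unfolding taubar_def using f_neg_above_tstar tstar_zero less_lambda_imp_less_R
    by (intro cSup_upper) (auto intro: bdd_aboveI[where M = R])
  then show ?thesis using s by simp
qed

lemma taubar_le_R: "taubar f R \<le> R"
proof -
  obtain s where "0 \<le> s" "s < lam" "f s < 0" by (rule f_neg_below_lambda)
  then have "s \<in> {t \<in> {0..<R}. f t < 0}" using less_lambda_imp_less_R by auto
  then show ?thesis unfolding taubar_def by (intro cSup_least) auto
qed

lemma le_tstar_if_f_nonneg:
  assumes "0 \<le> \<rho>" "\<rho> < taubar f R" "0 \<le> f \<rho>"
  shows "\<rho> \<le> tstar f R"
proof (rule ccontr)
  assume "\<not> \<rho> \<le> tstar f R"
  then have gt: "tstar f R < \<rho>" by simp
  have "{t \<in> {0..<R}. f t < 0} \<noteq> {}" using f_neg_below_lambda less_lambda_imp_less_R by auto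
  then obtain s where s: "0 \<le> s" "s < R" "f s < 0" "\<rho> < s"
    using less_cSupD[of "{t \<in> {0..<R}. f t < 0}" \<rho>] assms(2) unfolding taubar_def by auto
  have "f \<rho> \<le> 0 + f' \<rho> * (\<rho> - tstar f R)"
    using f_le_tangent[of "tstar f R" \<rho>] gt tstar_zero s by auto
  then have "0 \<le> f' \<rho> * (\<rho> - tstar f R)" using assms(3) by linarith
  then have "0 \<le> f' \<rho>" using gt by (simp add: zero_le_mult_iff)
  then have "f \<rho> \<le> f s" using f_ge_tangent[of \<rho> s] s assms(1) by (smt (verit) mult_nonneg_nonneg)
  then show False using assms(3) s by simp
qed

lemma increment_le_left_deriv_lambda:
  assumes "lam < R" "0 \<le> \<rho>" "0 \<le> e" "\<rho> + e \<le> lam"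
  shows "f' (\<rho> + e) - f' \<rho> \<le> left_deriv f' lam * e"
proof (cases "e = 0")
  case False
  have "convex_on {0..(lam + R) / 2} f'"
    using assms by (intro convex_on_subset[OF h2(2)]) auto
  then have "(f' (\<rho> + e) - f' \<rho>) / e \<le> left_deriv f' lam"
    using chord_slope_le_left_deriv[of 0 "(lam + R) / 2" f' \<rho> "\<rho> + e" lam] assms False by auto
  then show ?thesis using False assms(3) by (simp add: divide_le_eq mult.commute)
qed simp

end

section \<open>Estimates for F\<close>

locale newton_majorant = majorant_function f f' R for f f' :: "real \<Rightarrow> real" and R :: real +
  fixes F :: "'a::banach \<Rightarrow> 'b::banach"
    and F' :: "'a \<Rightarrow> ('a \<Rightarrow>\<^sub>L 'b)"
    and Finv :: "'b \<Rightarrow>\<^sub>L 'a"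
    and C :: "'a set" and x0 :: 'a
  assumes F_deriv: "\<forall>x\<in>interior C. (F has_derivative blinfun_apply (F' x)) (at x)"
    and Finv_left: "Finv o\<^sub>L F' x0 = id_blinfun"
    and Finv_right: "F' x0 o\<^sub>L Finv = id_blinfun"
    and ball_C: "ball x0 R \<subseteq> C"
    and majorant: "\<forall>x\<in>ball x0 R. \<forall>z\<in>ball x0 R. norm (x - x0) + norm (z - x) < R \<longrightarrow>
        norm (Finv o\<^sub>L (F' z - F' x)) \<le> f' (norm (z - x) + norm (x - x0)) - f' (norm (x - x0))"
    and init: "norm (blinfun_apply Finv (F x0)) \<le> f 0"
begin

lemma Finv_F'_x0: "Finv (F' x0 v) = v"
  using arg_cong[OF Finv_left, of "\<lambda>T. blinfun_apply T v"] by simp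

lemma Finv_eq_zeroD: "Finv w = 0 \<Longrightarrow> w = 0"
  using arg_cong[OF Finv_right, of "\<lambda>T. blinfun_apply T w"] by simp

lemma F_has_derivative: "x \<in> ball x0 R \<Longrightarrow> (F has_derivative blinfun_apply (F' x)) (at x)"
  using F_deriv interior_maximal[OF ball_C] by auto

lemma continuous_on_F: "continuous_on (ball x0 R) F"
  unfolding continuous_on_eq_continuous_within
  using F_has_derivative has_derivative_continuous has_derivative_at_withinI by blast

lemma norm_Finv_F'_minus_F'_x0:
  "x \<in> ball x0 R \<Longrightarrow> norm (Finv o\<^sub>L (F' x - F' x0)) \<le> f' (norm (x - x0)) + 1"
  using majorant[rule_format, of x0 x] h1 R_pos by (auto simp: dist_norm norm_minus_commute)

lemma Finv_F'_eq: "Finv (F' x v) = v + (Finv o\<^sub>L (F' x - F' x0)) v"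
  by (simp add: blinfun.diff_left blinfun.diff_right Finv_F'_x0)

lemma norm_Finv_F'_perturbation_le:
  "x \<in> ball x0 R \<Longrightarrow> norm ((Finv o\<^sub>L (F' x - F' x0)) v) \<le> (f' (norm (x - x0)) + 1) * norm v"
  using norm_blinfun[of "Finv o\<^sub>L (F' x - F' x0)" v] norm_Finv_F'_minus_F'_x0[of x]
  by (smt (verit, best) mult_right_mono norm_ge_zero)

lemma norm_Finv_F'_ge: "x \<in> ball x0 R \<Longrightarrow> - f' (norm (x - x0)) * norm v \<le> norm (Finv (F' x v))"
  using norm_Finv_F'_perturbation_le[of x v] norm_triangle_ineq4[of "Finv (F' x v)" "(Finv o\<^sub>L (F' x - F' x0)) v"]
  by (simp add: Finv_F'_eq algebra_simps)

lemma norm_Finv_F'_le: "x \<in> ball x0 R \<Longrightarrow> norm (Finv (F' x v)) \<le> (2 + f' (norm (x - x0))) * norm v"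
  using norm_Finv_F'_perturbation_le[of x v] norm_triangle_ineq[of v "(Finv o\<^sub>L (F' x - F' x0)) v"]
  by (simp add: Finv_F'_eq algebra_simps)

lemma segment_remainder_has_vector_derivative:
  assumes "(F has_derivative blinfun_apply Fd) (at (x + \<tau> *\<^sub>R w))"
  shows "((\<lambda>\<tau>. Finv (F (x + \<tau> *\<^sub>R w) - F x - \<tau> *\<^sub>R A w)) has_vector_derivative Finv (Fd w - A w)) (at \<tau>)"
proof -
  have "((\<lambda>\<tau>. x + \<tau> *\<^sub>R w) has_derivative (\<lambda>h. h *\<^sub>R w)) (at \<tau>)"
    by (auto intro!: derivative_eq_intros)
  from has_derivative_compose[OF this assms]
  have d: "((\<lambda>\<tau>. F (x + \<tau> *\<^sub>R w) - F x - \<tau> *\<^sub>R A w) has_derivative (\<lambda>h. Fd (h *\<^sub>R w) - 0 - h *\<^sub>R A w)) (at \<tau>)"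
    by (intro has_derivative_diff) (auto intro!: derivative_eq_intros)
  show ?thesis unfolding has_vector_derivative_def
    by (rule has_derivative_eq_rhs[OF bounded_linear.has_derivative[OF bounded_linear_blinfun_apply d]])
      (auto simp: fun_eq_iff blinfun.scaleR_right blinfun.diff_right scaleR_right_diff_distrib blinfun.scaleR_left)
qed

lemma norm_Finv_remainder_le_along_segment:
  fixes \<psi> \<psi>' :: "real \<Rightarrow> real"
  assumes seg: "\<And>\<tau>. 0 \<le> \<tau> \<Longrightarrow> \<tau> \<le> 1 \<Longrightarrow> x + \<tau> *\<^sub>R w \<in> ball x0 R"
    and \<psi>: "continuous_on {0..1} \<psi>" "\<And>\<tau>. 0 < \<tau> \<Longrightarrow> \<tau> < 1 \<Longrightarrow> (\<psi> has_real_derivative \<psi>' \<tau>) (at \<tau>)"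
    and bound: "\<And>\<tau>. 0 < \<tau> \<Longrightarrow> \<tau> < 1 \<Longrightarrow> norm (Finv (F' (x + \<tau> *\<^sub>R w) w - A w)) \<le> \<psi>' \<tau>"
  shows "norm (Finv (F (x + w) - F x - A w)) \<le> \<psi> 1 - \<psi> 0"
proof -
  define \<phi> where "\<phi> \<tau> = Finv (F (x + \<tau> *\<^sub>R w) - F x - \<tau> *\<^sub>R A w)" for \<tau>
  have "norm (\<phi> 1 - \<phi> 0) \<le> \<psi> 1 - \<psi> 0"
  proof (rule differentiable_bound_general[OF zero_less_one,
        where f' = "\<lambda>\<tau>. Finv (F' (x + \<tau> *\<^sub>R w) w - A w)" and \<phi>' = \<psi>'])
    have "continuous_on {0..1} (\<lambda>\<tau>. F (x + \<tau> *\<^sub>R w))"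
      using seg by (intro continuous_on_compose2[OF continuous_on_F] continuous_intros) auto
    then show "continuous_on {0..1} \<phi>" unfolding \<phi>_def
      by (intro blinfun.continuous_on[OF continuous_on_const] continuous_intros)
    fix \<tau> :: real assume \<tau>: "0 < \<tau>" "\<tau> < 1"
    show "(\<phi> has_vector_derivative Finv (F' (x + \<tau> *\<^sub>R w) w - A w)) (at \<tau>)"
      unfolding \<phi>_def using F_has_derivative seg \<tau> by (intro segment_remainder_has_vector_derivative) auto
    show "(\<psi> has_vector_derivative \<psi>' \<tau>) (at \<tau>)"
      using \<psi>(2)[OF \<tau>] by (simp add: has_real_derivative_iff_has_vector_derivative)
  qed (use \<psi> bound in auto)
  then show ?thesis by (simp add: \<phi>_def)
qed

lemma norm_Finv_remainder_le_lin_err: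
  assumes x: "x \<in> ball x0 R" and r: "norm (x - x0) + norm w < R"
  shows "norm (Finv (F (x + w) - F x - F' x w)) \<le> lin_err (norm (x - x0)) (norm w)"
proof -
  define \<rho> where "\<rho> = norm (x - x0)"
  define n where "n = norm w"
  have rn: "\<rho> + n < R" using r by (simp add: \<rho>_def n_def)
  have near: "\<rho> + \<tau> * n < R" "norm (x + \<tau> *\<^sub>R w - x0) \<le> \<rho> + \<tau> * n" if "0 \<le> \<tau>" "\<tau> \<le> 1" for \<tau>
  proof -
    show "\<rho> + \<tau> * n < R" using rn that mult_left_le_one_le[of n \<tau>] by (simp add: n_def)
    show "norm (x + \<tau> *\<^sub>R w - x0) \<le> \<rho> + \<tau> * n"
      using norm_triangle_ineq[of "x - x0" "\<tau> *\<^sub>R w"] that by (simp add: \<rho>_def n_def algebra_simps)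
  qed
  have "norm (Finv (F (x + w) - F x - F' x w)) \<le>
     (f (\<rho> + 1 * n) - f' \<rho> * (1 * n)) - (f (\<rho> + 0 * n) - f' \<rho> * (0 * n))"
  proof (rule norm_Finv_remainder_le_along_segment[where \<psi> = "\<lambda>\<tau>. f (\<rho> + \<tau> * n) - f' \<rho> * (\<tau> * n)"
        and \<psi>' = "\<lambda>\<tau>. f' (\<rho> + \<tau> * n) * n - f' \<rho> * n"])
    show "x + \<tau> *\<^sub>R w \<in> ball x0 R" if "0 \<le> \<tau>" "\<tau> \<le> 1" for \<tau>
      using near[OF that] by (simp add: dist_norm norm_minus_commute)
    have "continuous_on {0..1} (\<lambda>\<tau>. f (\<rho> + \<tau> * n))"
      using near(1) by (intro continuous_on_compose2[OF continuous_on_f] continuous_intros)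
        (auto simp: \<rho>_def n_def)
    then show "continuous_on {0..1} (\<lambda>\<tau>. f (\<rho> + \<tau> * n) - f' \<rho> * (\<tau> * n))"
      by (intro continuous_intros)
  next
    fix \<tau> :: real assume \<tau>: "0 < \<tau>" "\<tau> < 1"
    show "((\<lambda>\<tau>. f (\<rho> + \<tau> * n) - f' \<rho> * (\<tau> * n)) has_real_derivative f' (\<rho> + \<tau> * n) * n - f' \<rho> * n) (at \<tau>)"
    proof (cases "n = 0")
      case False
      then have "(f has_real_derivative f' (\<rho> + \<tau> * n)) (at (\<rho> + \<tau> * n))"
        using near(1)[of \<tau>] \<tau> by (intro f_has_derivative_at) (auto simp: \<rho>_def n_def add_nonneg_pos)
      moreover have "((\<lambda>\<tau>. \<rho> + \<tau> * n) has_real_derivative n) (at \<tau>)"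
        by (auto intro!: derivative_eq_intros)
      ultimately have "((\<lambda>\<tau>. f (\<rho> + \<tau> * n)) has_real_derivative f' (\<rho> + \<tau> * n) * n) (at \<tau>)"
        using DERIV_chain2[where g = "\<lambda>\<tau>. \<rho> + \<tau> * n"] by blast
      then show ?thesis by (auto intro!: derivative_eq_intros)
    qed simp
    define z where "z = x + \<tau> *\<^sub>R w"
    have z: "z \<in> ball x0 R" "norm (z - x) = \<tau> * n"
      using near[of \<tau>] \<tau> by (auto simp: z_def n_def dist_norm norm_minus_commute)
    have "norm (Finv (F' z w - F' x w)) \<le> norm (Finv o\<^sub>L (F' z - F' x)) * n"
      using norm_blinfun[of "Finv o\<^sub>L (F' z - F' x)" w] by (simp add: n_def blinfun.diff_left blinfun.diff_right)
    also have "\<dots> \<le> (f' (\<tau> * n + \<rho>) - f' \<rho>) * n"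
      using majorant[rule_format, OF x z(1)] z near(1)[of \<tau>] \<tau> by (intro mult_right_mono) (auto simp: \<rho>_def n_def)
    finally show "norm (Finv (F' (x + \<tau> *\<^sub>R w) w - F' x w)) \<le> f' (\<rho> + \<tau> * n) * n - f' \<rho> * n"
      by (simp add: z_def algebra_simps)
  qed
  then show ?thesis by (simp add: \<rho>_def n_def lin_err_def)
qed

lemma minus_f_le_norm_Finv_F:
  assumes x: "x \<in> ball x0 R"
  shows "- f (norm (x - x0)) \<le> norm (Finv (F x))"
proof -
  define \<rho> where "\<rho> = norm (x - x0)"
  have rem: "norm (Finv (F x - F x0 - F' x0 (x - x0))) \<le> f \<rho> - f 0 + \<rho>"
    using norm_Finv_remainder_le_lin_err[of x0 "x - x0"] x R_pos h1
    by (simp add: \<rho>_def lin_err_def dist_norm norm_minus_commute)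
  have eq: "x - x0 = Finv (F x) - Finv (F x0) - Finv (F x - F x0 - F' x0 (x - x0))"
    by (simp add: blinfun.diff_right Finv_F'_x0)
  have "norm (Finv (F x) - Finv (F x0) - Finv (F x - F x0 - F' x0 (x - x0)))
     \<le> norm (Finv (F x) - Finv (F x0)) + norm (Finv (F x - F x0 - F' x0 (x - x0)))"
    by (rule norm_triangle_ineq4)
  also have "norm (Finv (F x) - Finv (F x0)) \<le> norm (Finv (F x)) + norm (Finv (F x0))"
    by (rule norm_triangle_ineq4)
  finally have "\<rho> \<le> norm (Finv (F x)) + norm (Finv (F x0)) + norm (Finv (F x - F x0 - F' x0 (x - x0)))"
    unfolding \<rho>_def by (subst eq) simp
  then show ?thesis using rem init by (simp add: \<rho>_def)
qed

lemma Nclass_residual_le: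
  "N \<in> Nclass F F' Finv x0 (tbar f' R) \<theta> \<Longrightarrow> x \<in> ball x0 lam \<Longrightarrow>
    norm (Finv (F x + F' x (N x - x))) \<le> \<theta> * norm (Finv (F x))"
  using lambda_le_tbar by (auto simp: Nclass_def)

lemma inexact_newton_step:
  assumes \<theta>: "0 \<le> \<theta>" "\<theta> \<le> Theta f R" and te: "(t, \<epsilon>) \<in> Omega f f' R"
    and nt: "(t', \<epsilon>') = n_theta f f' \<theta> (t, \<epsilon>)"
    and x: "x \<in> Kset F Finv x0 f t \<epsilon>"
    and N: "N \<in> Nclass F F' Finv x0 (tbar f' R) \<theta>"
  shows "norm (N x - x) \<le> t' - t" "N x \<in> Kset F Finv x0 f t' \<epsilon>'"
proof -
  note step = n_theta_step[OF \<theta> te nt]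
  have t: "0 \<le> t" "t < lam" using te by (auto simp: Omega_def)
  define \<rho> where "\<rho> = norm (x - x0)"
  define s where "s = N x - x"
  define r where "r = Finv (F x + F' x s)"
  have \<rho>: "\<rho> \<le> t" and Fx: "norm (Finv (F x)) \<le> f t + \<epsilon>" using x by (auto simp: Kset_def \<rho>_def)
  have x_lam: "x \<in> ball x0 lam" using \<rho> t by (simp add: dist_norm norm_minus_commute \<rho>_def)
  then have xR: "x \<in> ball x0 R" using lambda_le_R by auto
  have r: "norm r \<le> \<theta> * (f t + \<epsilon>)"
    using Nclass_residual_le[OF N x_lam] Fx \<theta> unfolding r_def s_def
    by (meson mult_left_mono order_trans)
  have "- f' t * norm s \<le> - f' \<rho> * norm s"
    using f'_le[of \<rho> t] \<rho> t less_lambda_imp_less_R by (intro mult_right_mono) (auto simp: \<rho>_def)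
  also have "\<dots> \<le> norm (Finv (F' x s))" using norm_Finv_F'_ge[OF xR] by (simp add: \<rho>_def)
  also have "\<dots> \<le> norm r + norm (Finv (F x))"
    using norm_triangle_ineq4[of r "Finv (F x)"] by (simp add: r_def blinfun.add_right)
  also have "\<dots> \<le> (1 + \<theta>) * (f t + \<epsilon>)" using r Fx by (simp add: algebra_simps)
  finally have "norm s * (- f' t) \<le> (1 + \<theta>) * (f t + \<epsilon>)" by (simp only: mult.commute)
  then have "norm s \<le> (1 + \<theta>) * (f t + \<epsilon>) / (- f' t)"
    using f'_neg_below_lambda[OF t] by (simp only: pos_le_divide_eq neg_0_less_iff_less)
  then show ns: "norm (N x - x) \<le> t' - t" using step(4) by (simp add: s_def)
  have "t' < R" using step(1) lambda_le_R by (auto simp: Omega_def)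
  have "norm (N x - x0) \<le> t'"
    using norm_triangle_ineq[of "x - x0" "N x - x"] ns \<rho> by (simp add: \<rho>_def)
  moreover have "norm (Finv (F (N x))) \<le> f t' + \<epsilon>'"
  proof -
    have "Finv (F (N x)) = Finv (F (x + s) - F x - F' x s) + r"
      by (simp add: s_def r_def blinfun.diff_right blinfun.add_right)
    then have "norm (Finv (F (N x))) \<le> norm (Finv (F (x + s) - F x - F' x s)) + norm r"
      by (simp add: norm_triangle_ineq)
    also have "norm (Finv (F (x + s) - F x - F' x s)) \<le> lin_err \<rho> (norm s)"
      using norm_Finv_remainder_le_lin_err[OF xR, of s] ns \<rho> \<open>t' < R\<close> by (simp add: \<rho>_def s_def)
    also have "\<dots> \<le> lin_err t (t' - t)"
      using lin_err_mono[of \<rho> t "norm s" "t' - t"] \<rho> ns \<open>t' < R\<close> by (simp add: s_def \<rho>_def)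
    finally show ?thesis using r step(5) by simp
  qed
  ultimately show "N x \<in> Kset F Finv x0 f t' \<epsilon>'" by (simp add: Kset_def)
qed

lemma zero_norm_le_tstar:
  "z \<in> ball x0 (taubar f R) \<Longrightarrow> F z = 0 \<Longrightarrow> norm (z - x0) \<le> tstar f R"
  using minus_f_le_norm_Finv_F[of z] taubar_le_R
  by (intro le_tstar_if_f_nonneg) (auto simp: dist_norm norm_minus_commute)

lemma norm_Finv_deviation_le_in_cball_tstar:
  assumes "norm (u - x0) \<le> tstar f R" "norm (v - x0) \<le> tstar f R"
  shows "norm (Finv (F v - F u - F' x0 (v - u))) \<le> (f' (tstar f R) + 1) * norm (v - u)"
proof -
  define w where "w = v - u"
  define B where "B = f' (tstar f R) + 1"
  have near: "norm (u + \<tau> *\<^sub>R w - x0) \<le> tstar f R" if "0 \<le> \<tau>" "\<tau> \<le> 1" for \<tau>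
  proof -
    have "u + \<tau> *\<^sub>R w - x0 = (1 - \<tau>) *\<^sub>R (u - x0) + \<tau> *\<^sub>R (v - x0)"
      by (simp add: w_def algebra_simps)
    then have "norm (u + \<tau> *\<^sub>R w - x0) \<le> (1 - \<tau>) * norm (u - x0) + \<tau> * norm (v - x0)"
      using norm_triangle_ineq[of "(1 - \<tau>) *\<^sub>R (u - x0)" "\<tau> *\<^sub>R (v - x0)"] that by simp
    also have "\<dots> \<le> (1 - \<tau>) * tstar f R + \<tau> * tstar f R"
      using that assms by (intro add_mono mult_left_mono) auto
    finally show ?thesis by (simp add: algebra_simps)
  qed
  have tstar_R: "tstar f R < R" using tstar_zero lambda_le_R by simp
  have "norm (Finv (F (u + w) - F u - F' x0 w)) \<le> 1 * B * norm w - 0 * B * norm w"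
  proof (rule norm_Finv_remainder_le_along_segment[where \<psi> = "\<lambda>\<tau>. \<tau> * B * norm w" and \<psi>' = "\<lambda>\<tau>. B * norm w"])
    show "u + \<tau> *\<^sub>R w \<in> ball x0 R" if "0 \<le> \<tau>" "\<tau> \<le> 1" for \<tau>
      using near[OF that] tstar_R by (simp add: dist_norm norm_minus_commute)
    fix \<tau> :: real assume \<tau>: "0 < \<tau>" "\<tau> < 1"
    define p where "p = u + \<tau> *\<^sub>R w"
    have p: "norm (p - x0) \<le> tstar f R" "p \<in> ball x0 R"
      using near[of \<tau>] \<tau> tstar_R by (auto simp: p_def dist_norm norm_minus_commute)
    have "norm (Finv (F' p w - F' x0 w)) = norm ((Finv o\<^sub>L (F' p - F' x0)) w)"
      by (simp add: blinfun.diff_left blinfun.diff_right)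
    also have "\<dots> \<le> (f' (norm (p - x0)) + 1) * norm w" by (rule norm_Finv_F'_perturbation_le[OF p(2)])
    also have "\<dots> \<le> B * norm w"
      unfolding B_def using f'_le[of "norm (p - x0)" "tstar f R"] p tstar_R by (intro mult_right_mono) auto
    finally show "norm (Finv (F' (u + \<tau> *\<^sub>R w) w - F' x0 w)) \<le> B * norm w" by (simp add: p_def)
  qed (auto intro!: continuous_intros derivative_eq_intros)
  then show ?thesis by (simp add: w_def B_def)
qed

lemma zero_unique:
  assumes xs: "norm (xs - x0) \<le> tstar f R" "F xs = 0"
    and z: "z \<in> ball x0 (taubar f R)" "F z = 0"
  shows "z = xs"
proof -
  have "norm (Finv (F z - F xs - F' x0 (z - xs))) = norm (z - xs)"
    using xs z by (simp add: blinfun.diff_right Finv_F'_x0 norm_minus_commute)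
  then have "norm (z - xs) \<le> (f' (tstar f R) + 1) * norm (z - xs)"
    using norm_Finv_deviation_le_in_cball_tstar[OF xs(1) zero_norm_le_tstar[OF z]] by simp
  then have "norm (z - xs) = 0" using f'_tstar_neg
    by (smt (verit) mult_le_cancel_right1 norm_ge_zero)
  then show ?thesis by simp
qed

lemma newton_step_distance_to_zero:
  assumes \<theta>: "0 \<le> \<theta>" and N: "N \<in> Nclass F F' Finv x0 (tbar f' R) \<theta>"
    and x: "x \<in> ball x0 lam" and xs: "F xs = 0" and near: "norm (x - x0) + norm (xs - x) < R"
  defines "\<rho> \<equiv> norm (x - x0)" and "e \<equiv> norm (xs - x)"
  shows "- f' \<rho> * norm (xs - N x) \<le> (1 + \<theta>) * ((f' (\<rho> + e) - f' \<rho>) * e / 2) + \<theta> * ((2 + f' \<rho>) * e)"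
proof -
  define r where "r = Finv (F x + F' x (N x - x))"
  define Er where "Er = Finv (F (x + (xs - x)) - F x - F' x (xs - x))"
  have xR: "x \<in> ball x0 R" using x lambda_le_R by auto
  have "norm Er \<le> lin_err \<rho> e"
    using norm_Finv_remainder_le_lin_err[OF xR near] by (simp add: Er_def \<rho>_def e_def)
  also have "\<dots> \<le> (f' (\<rho> + e) - f' \<rho>) * e / 2"
    using lin_err_le_half_slope near by (simp add: \<rho>_def e_def)
  finally have Er: "norm Er \<le> (f' (\<rho> + e) - f' \<rho>) * e / 2" .
  have "Finv (F x) = - Finv (F' x (xs - x)) - Er"
    using xs by (simp add: Er_def blinfun.diff_right blinfun.minus_right)
  then have "norm (Finv (F x)) \<le> norm (Finv (F' x (xs - x))) + norm Er"
    by (metis norm_minus_cancel norm_triangle_ineq4)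
  also have "norm (Finv (F' x (xs - x))) \<le> (2 + f' \<rho>) * e"
    using norm_Finv_F'_le[OF xR] by (simp add: \<rho>_def e_def)
  finally have Fx: "norm (Finv (F x)) \<le> (2 + f' \<rho>) * e + norm Er" by simp
  have "Finv (F' x (xs - N x)) = - Er - r"
    using xs by (simp add: Er_def r_def blinfun.diff_right blinfun.add_right blinfun.minus_right)
  then have "- f' \<rho> * norm (xs - N x) \<le> norm (- Er - r)"
    using norm_Finv_F'_ge[OF xR] by (metis \<rho>_def)
  also have "\<dots> \<le> norm Er + norm r" using norm_triangle_ineq4[of "- Er" r] by simp
  also have "\<dots> \<le> norm Er + \<theta> * ((2 + f' \<rho>) * e + norm Er)"
    using Nclass_residual_le[OF N x] Fx \<theta> unfolding r_def by (smt (verit) mult_left_mono)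
  also have "\<dots> = (1 + \<theta>) * norm Er + \<theta> * ((2 + f' \<rho>) * e)" by (simp add: algebra_simps)
  also have "\<dots> \<le> (1 + \<theta>) * ((f' (\<rho> + e) - f' \<rho>) * e / 2) + \<theta> * ((2 + f' \<rho>) * e)"
    using Er \<theta> by (intro add_right_mono mult_left_mono) auto
  finally show ?thesis .
qed

end

section \<open>The inexact Newton iteration\<close>

locale inexact_newton_iteration =
  newton_majorant f f' R F F' Finv C x0 for f f' R F F' Finv C x0 +
  fixes \<theta> :: real and N :: "'a::banach \<Rightarrow> 'a" and t0 \<epsilon>0 :: real and y0 :: 'a
    and y :: "nat \<Rightarrow> 'a" and t \<epsilon> :: "nat \<Rightarrow> real"
  assumes theta: "0 \<le> \<theta>" "\<theta> \<le> Theta f R"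
    and N_in: "N \<in> Nclass F F' Finv x0 (tbar f' R) \<theta>"
    and start: "(t0, \<epsilon>0) \<in> Omega f f' R"
    and y0_in: "y0 \<in> Kset F Finv x0 f t0 \<epsilon>0"
    and y_0: "y 0 = y0" and y_Suc: "\<forall>k. y (Suc k) = N (y k)"
    and te_0: "(t 0, \<epsilon> 0) = (t0, \<epsilon>0)"
    and te_Suc: "\<forall>k. (t (Suc k), \<epsilon> (Suc k)) = n_theta f f' \<theta> (t k, \<epsilon> k)"
begin

lemma iterate_in_K_and_Omega: "y k \<in> Kset F Finv x0 f (t k) (\<epsilon> k) \<and> (t k, \<epsilon> k) \<in> Omega f f' R"
proof (induction k)
  case 0
  then show ?case using y0_in start y_0 te_0 by simp
next
  case (Suc k)
  then show ?case
    using inexact_newton_step(2)[OF theta _ te_Suc[rule_format] _ N_in] n_theta_step(1)[OF theta _ te_Suc[rule_format]]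
      y_Suc by auto
qed

lemma iterate_in_K: "y k \<in> Kset F Finv x0 f (t k) (\<epsilon> k)"
  and majorant_in_Omega: "(t k, \<epsilon> k) \<in> Omega f f' R"
  using iterate_in_K_and_Omega by auto

lemma t_bounds: "0 \<le> t k" "t k < lam"
  and \<epsilon>_bounds: "0 \<le> \<epsilon> k" "\<epsilon> k \<le> kap * t k"
  using majorant_in_Omega[of k] by (auto simp: Omega_def)

lemma iterate_norm_le: "norm (y k - x0) \<le> t k"
  and residual_le: "norm (Finv (F (y k))) \<le> f (t k) + \<epsilon> k"
  using iterate_in_K[of k] by (auto simp: Kset_def)

lemma iterate_in_ball_lambda: "y k \<in> ball x0 lam"
  using iterate_norm_le[of k] t_bounds[of k] by (simp add: dist_norm norm_minus_commute)

lemma iterate_step_le: "norm (y (Suc k) - y k) \<le> t (Suc k) - t k"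
  using inexact_newton_step(1)[OF theta majorant_in_Omega te_Suc[rule_format] iterate_in_K N_in] y_Suc by auto

lemma strict_mono_t: "strict_mono t"
  using n_theta_step(2)[OF theta majorant_in_Omega te_Suc[rule_format]] by (simp add: strict_mono_Suc_iff)

lemma mono_\<epsilon>: "mono \<epsilon>"
  using n_theta_step(3)[OF theta majorant_in_Omega te_Suc[rule_format]] by (simp add: mono_iff_le_Suc)

lemma residual_bound_geometric: "f (t k) + \<epsilon> k \<le> ((1 + \<theta>\<^sup>2) / 2) ^ k * (f t0 + \<epsilon>0)"
proof (induction k)
  case (Suc k)
  have "f (t (Suc k)) + \<epsilon> (Suc k) \<le> (1 + \<theta>\<^sup>2) / 2 * (f (t k) + \<epsilon> k)"
    using n_theta_step(6)[OF theta majorant_in_Omega te_Suc[rule_format]] .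
  also have "\<dots> \<le> (1 + \<theta>\<^sup>2) / 2 * (((1 + \<theta>\<^sup>2) / 2) ^ k * (f t0 + \<epsilon>0))"
    using Suc.IH by (intro mult_left_mono) auto
  finally show ?case by simp
qed (use te_0 in simp)

lemma residual_bound_tendsto_0: "(\<lambda>k. f (t k) + \<epsilon> k) \<longlonglongrightarrow> 0"
proof (rule Lim_null_comparison)
  have "\<theta>\<^sup>2 < 1" using Theta_less_one theta by (simp add: abs_square_less_1)
  then show "(\<lambda>k. ((1 + \<theta>\<^sup>2) / 2) ^ k * (f t0 + \<epsilon>0)) \<longlonglongrightarrow> 0"
    by (intro tendsto_mult_left_zero LIMSEQ_power_zero) auto
  show "\<forall>\<^sub>F k in sequentially. norm (f (t k) + \<epsilon> k) \<le> ((1 + \<theta>\<^sup>2) / 2) ^ k * (f t0 + \<epsilon>0)"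
  proof (intro always_eventually allI)
    fix k
    have "0 < f (t k) + \<epsilon> k" using majorant_in_Omega[of k] by (simp add: Omega_def)
    then show "norm (f (t k) + \<epsilon> k) \<le> ((1 + \<theta>\<^sup>2) / 2) ^ k * (f t0 + \<epsilon>0)"
      using residual_bound_geometric[of k] by simp
  qed
qed

lemma t_limit: "t \<longlonglongrightarrow> lim t" "0 < lim t" "lim t \<le> lam" "t k \<le> lim t"
proof -
  have bdd: "bdd_above (range t)" using t_bounds by (intro bdd_aboveI2[where M = lam]) (auto simp: less_imp_le)
  have "t \<longlonglongrightarrow> (SUP k. t k)"
    using strict_mono_mono[OF strict_mono_t] by (intro LIMSEQ_incseq_SUP[OF bdd]) (simp add: incseq_def mono_def)
  then show lim: "t \<longlonglongrightarrow> lim t" by (simp add: limI)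
  show le: "t k \<le> lim t" for k
    using strict_mono_mono[OF strict_mono_t] by (intro incseq_le[OF _ lim]) (simp add: incseq_def mono_def)
  show "lim t \<le> lam" using t_bounds by (intro LIMSEQ_le_const2[OF lim]) (auto simp: less_imp_le)
  show "0 < lim t" using t_bounds(1)[of 0] strict_monoD[OF strict_mono_t, of 0 1] le[of 1] by simp
qed

lemma \<epsilon>_limit: "\<epsilon> \<longlonglongrightarrow> lim \<epsilon>" "0 \<le> lim \<epsilon>" "lim \<epsilon> \<le> kap * lam"
proof -
  have le: "\<epsilon> k \<le> kap * lam" for k
    using \<epsilon>_bounds[of k] t_bounds[of k] kappa_pos by (smt (verit) mult_left_mono)
  have "\<epsilon> \<longlonglongrightarrow> (SUP k. \<epsilon> k)"
    using mono_\<epsilon> le by (intro LIMSEQ_incseq_SUP bdd_aboveI2) (auto simp: incseq_def mono_def)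
  then show lim: "\<epsilon> \<longlonglongrightarrow> lim \<epsilon>" by (simp add: limI)
  show "0 \<le> lim \<epsilon>" using \<epsilon>_bounds by (intro LIMSEQ_le_const[OF lim]) auto
  show "lim \<epsilon> \<le> kap * lam" using le by (intro LIMSEQ_le_const2[OF lim]) auto
qed

lemma iterate_limit: "y \<longlonglongrightarrow> lim y" "norm (lim y - y k) \<le> lim t - t k"
proof -
  obtain x where "y \<longlonglongrightarrow> x" "\<And>k. norm (x - y k) \<le> lim t - t k"
    using majorized_sequence_converges[OF iterate_step_le t_limit(1)] by blast
  then show "y \<longlonglongrightarrow> lim y" "norm (lim y - y k) \<le> lim t - t k" by (simp_all add: limI)
qed

lemma limit_norm_le_tstar: "norm (lim y - x0) \<le> tstar f R"
proof (rule ccontr)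
  assume "\<not> norm (lim y - x0) \<le> tstar f R"
  define s where "s = (tstar f R + norm (lim y - x0)) / 2"
  have s: "tstar f R < s" "s < norm (lim y - x0)" using \<open>\<not> _ \<le> _\<close> by (auto simp: s_def)
  have norm_lim: "(\<lambda>k. norm (y k - x0)) \<longlonglongrightarrow> norm (lim y - x0)"
    using iterate_limit(1) by (intro tendsto_intros)
  then have "norm (lim y - x0) \<le> lim t"
    using iterate_norm_le t_limit(4) by (intro LIMSEQ_le_const2) (auto intro: order_trans)
  then have "s < lam" using s t_limit(3) by simp
  obtain M where M: "\<And>k. M \<le> k \<Longrightarrow> s < norm (y k - x0)"
    using order_tendstoD(1)[OF norm_lim s(2)] unfolding eventually_sequentially by blast
  have "- f s \<le> f (t k) + \<epsilon> k" if "M \<le> k" for k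
  proof -
    have "f (norm (y k - x0)) \<le> f s"
      using f_strict_antimono_below_lambda[of s "norm (y k - x0)"] M[OF that] iterate_norm_le[of k]
        t_bounds[of k] s tstar_zero by fastforce
    moreover have "- f (norm (y k - x0)) \<le> norm (Finv (F (y k)))"
      using minus_f_le_norm_Finv_F[of "y k"] iterate_in_ball_lambda[of k] lambda_le_R by auto
    ultimately show ?thesis using residual_le[of k] by simp
  qed
  then have "- f s \<le> 0" using LIMSEQ_le_const[OF residual_bound_tendsto_0, of "- f s"] by blast
  then show False using f_neg_above_tstar[OF s(1) \<open>s < lam\<close>] by simp
qed

lemma limit_in_ball_R: "lim y \<in> ball x0 R"
  using limit_norm_le_tstar tstar_zero lambda_le_R by (simp add: dist_norm norm_minus_commute)

lemma limit_is_zero: "F (lim y) = 0"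
proof -
  have "(\<lambda>k. Finv (F (y k))) \<longlonglongrightarrow> Finv (F (lim y))"
    using F_has_derivative[OF limit_in_ball_R] iterate_limit(1)
    by (intro tendsto_intros isCont_tendsto_compose[of _ F]) (auto dest: has_derivative_continuous)
  moreover have "(\<lambda>k. Finv (F (y k))) \<longlonglongrightarrow> 0"
    using residual_le by (intro Lim_null_comparison[OF _ residual_bound_tendsto_0]) auto
  ultimately show ?thesis using LIMSEQ_unique Finv_eq_zeroD by blast
qed

lemma limit_in_ball_taubar: "lim y \<in> ball x0 (taubar f R)"
  using limit_norm_le_tstar tstar_less_taubar by (simp add: dist_norm norm_minus_commute)

lemma limit_unique_zero: "z \<in> ball x0 (taubar f R) \<Longrightarrow> F z = 0 \<Longrightarrow> z = lim y"
  using zero_unique[OF limit_norm_le_tstar limit_is_zero] by blast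

lemma distance_after_step:
  fixes k :: nat
  assumes "lam < R"
  defines "\<rho> \<equiv> norm (y k - x0)" and "e \<equiv> norm (lim y - y k)"
  shows "\<rho> + e \<le> lam"
    and "- f' \<rho> * norm (lim y - y (Suc k))
      \<le> (1 + \<theta>) * ((f' (\<rho> + e) - f' \<rho>) * e / 2) + \<theta> * ((2 - - f' \<rho>) * e)"
proof -
  show "\<rho> + e \<le> lam" using iterate_norm_le[of k] iterate_limit(2)[of k] t_limit(3) by (simp add: \<rho>_def e_def)
  then show "- f' \<rho> * norm (lim y - y (Suc k))
      \<le> (1 + \<theta>) * ((f' (\<rho> + e) - f' \<rho>) * e / 2) + \<theta> * ((2 - - f' \<rho>) * e)"
    using newton_step_distance_to_zero[OF theta(1) N_in iterate_in_ball_lambda limit_is_zero] assms y_Suc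
    by (simp add: \<rho>_def e_def)
qed

lemma rate_left_deriv:
  assumes "lam < R"
  shows "norm (lim y - y (Suc k)) \<le>
    ((1 + \<theta>) / 2 * (left_deriv f' lam / \<bar>f' lam\<bar>) * norm (lim y - y k)
      + \<theta> * ((2 + f' lam) / \<bar>f' lam\<bar>)) * norm (lim y - y k)"
proof -
  define \<rho> where "\<rho> = norm (y k - x0)"
  define e where "e = norm (lim y - y k)"
  note dist = distance_after_step[OF assms, of k, folded \<rho>_def e_def]
  have "\<rho> \<le> lam" using dist(1) norm_ge_zero[of "lim y - y k"] unfolding e_def by linarith
  have "0 < - f' lam" using f'_lambda_le[OF assms] kappa_pos by simp
  moreover have "- f' lam \<le> - f' \<rho>"
    using f'_le[of \<rho> lam] \<open>\<rho> \<le> lam\<close> assms by (simp add: \<rho>_def)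
  moreover have "0 \<le> f' (\<rho> + e) - f' \<rho>"
    using f'_le[of \<rho> "\<rho> + e"] dist(1) assms by (simp add: \<rho>_def e_def)
  moreover have "f' (\<rho> + e) - f' \<rho> \<le> left_deriv f' lam * e"
    using increment_le_left_deriv_lambda[OF assms] dist(1) by (simp add: \<rho>_def e_def)
  ultimately have "norm (lim y - y (Suc k)) \<le>
      ((1 + \<theta>) / 2 * (left_deriv f' lam / - f' lam) * e + \<theta> * ((2 - - f' lam) / - f' lam)) * e"
    using dist(2) theta(1)
    by (intro rate_bound_by_left_deriv[where D = "- f' \<rho>" and S = "f' (\<rho> + e) - f' \<rho>"]) (auto simp: e_def)
  then show ?thesis using \<open>0 < - f' lam\<close> by (simp add: e_def)
qed

lemma rate_kappa:
  assumes "lam < R"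
  shows "norm (lim y - y (Suc k)) \<le> ((1 + \<theta>) / 2 + 2 * \<theta> / kap) * norm (lim y - y k)"
proof -
  define \<rho> where "\<rho> = norm (y k - x0)"
  define e where "e = norm (lim y - y k)"
  note dist = distance_after_step[OF assms, of k, folded \<rho>_def e_def]
  have "\<rho> \<le> lam" using dist(1) norm_ge_zero[of "lim y - y k"] unfolding e_def by linarith
  have "f' (\<rho> + e) \<le> f' lam" using f'_le[of "\<rho> + e" lam] dist(1) assms by (simp add: \<rho>_def e_def)
  then have "f' (\<rho> + e) - f' \<rho> \<le> - f' \<rho>" using f'_lambda_le[OF assms] kappa_pos by simp
  moreover have "0 \<le> f' (\<rho> + e) - f' \<rho>"
    using f'_le[of \<rho> "\<rho> + e"] dist(1) assms by (simp add: \<rho>_def e_def)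
  moreover have "kap \<le> - f' \<rho>"
    using f'_le[of \<rho> lam] f'_lambda_le[OF assms] \<open>\<rho> \<le> lam\<close> assms by (simp add: \<rho>_def)
  ultimately show ?thesis
    using dist(2) theta(1) kappa_pos by (intro rate_bound_by_kappa[where D = "- f' \<rho>" and S = "f' (\<rho> + e) - f' \<rho>"]) (auto simp: e_def)
qed

end

theorem theorem5p1:
  fixes F :: "'a::banach \<Rightarrow> 'b::banach"
    and F' :: "'a \<Rightarrow> ('a \<Rightarrow>\<^sub>L 'b)"
    and Finv :: "'b \<Rightarrow>\<^sub>L 'a"
    and C :: "'a set" and x0 :: 'a and R :: real
    and f f' :: "real \<Rightarrow> real"
    and \<theta> :: real and N :: "'a \<Rightarrow> 'a"
    and t0 \<epsilon>0 :: real and y0 :: 'a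
    and y :: "nat \<Rightarrow> 'a" and t \<epsilon> :: "nat \<Rightarrow> real"
  assumes F_cont: "continuous_on C F"
    and F_deriv: "\<forall>x\<in>interior C. (F has_derivative blinfun_apply (F' x)) (at x)"
    and F'_cont: "continuous_on (interior C) F'"
    and x0_int: "x0 \<in> interior C"
    and Finv_left: "Finv o\<^sub>L F' x0 = id_blinfun"
    and Finv_right: "F' x0 o\<^sub>L Finv = id_blinfun"
    and f_deriv: "\<forall>s\<in>{0..<R}. (f has_real_derivative f' s) (at s within {0..<R})"
    and f'_cont: "continuous_on {0..<R} f'"
    and ball_C: "ball x0 R \<subseteq> C"
    and majorant: "\<forall>x\<in>ball x0 R. \<forall>z\<in>ball x0 R. norm (x - x0) + norm (z - x) < R \<longrightarrow>
        norm (Finv o\<^sub>L (F' z - F' x)) \<le> f' (norm (z - x) + norm (x - x0)) - f' (norm (x - x0))"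
    and init: "norm (blinfun_apply Finv (F x0)) \<le> f 0"
    and h1: "f 0 > 0" "f' 0 = -1"
    and h2: "strict_mono_on {0..<R} f'" "convex_on {0..<R} f'"
    and h3: "\<exists>s\<in>{0<..<R}. f s < 0"
    and theta: "0 \<le> \<theta>" "\<theta> \<le> Theta f R"
    and N_in: "N \<in> Nclass F F' Finv x0 (tbar f' R) \<theta>"
    and start: "(t0, \<epsilon>0) \<in> Omega f f' R"
    and y0_in: "y0 \<in> Kset F Finv x0 f t0 \<epsilon>0"
    and y_0: "y 0 = y0" and y_Suc: "\<forall>k. y (Suc k) = N (y k)"
    and te_0: "(t 0, \<epsilon> 0) = (t0, \<epsilon>0)"
    and te_Suc: "\<forall>k. (t (Suc k), \<epsilon> (Suc k)) = n_theta f f' \<theta> (t k, \<epsilon> k)"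
  shows "\<exists>tt ee xs.
     (\<forall>k. y k \<in> ball x0 (tbar f' R) \<and> t k < tbar f' R \<and> 0 \<le> \<epsilon> k) \<and>
     (\<forall>k. y k \<in> Kset F Finv x0 f (t k) (\<epsilon> k) \<and> (t k, \<epsilon> k) \<in> Omega f f' R) \<and>
     strict_mono t \<and> t \<longlonglongrightarrow> tt \<and> 0 < tt \<and> tt \<le> lambda f f' R \<and>
     mono \<epsilon> \<and> \<epsilon> \<longlonglongrightarrow> ee \<and> 0 \<le> ee \<and> ee \<le> kappa f R * lambda f f' R \<and>
     (\<forall>k. norm (blinfun_apply Finv (F (y k))) \<le> f (t k) + \<epsilon> k \<and>
          f (t k) + \<epsilon> k \<le> ((1 + \<theta>\<^sup>2) / 2) ^ k * (f t0 + \<epsilon>0)) \<and>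
     (\<forall>k. y k \<in> ball x0 (lambda f f' R)) \<and>
     y \<longlonglongrightarrow> xs \<and> xs \<in> cball x0 (tstar f R) \<and>
     xs \<in> ball x0 (taubar f R) \<and> F xs = 0 \<and>
     (\<forall>z\<in>ball x0 (taubar f R). F z = 0 \<longrightarrow> z = xs) \<and>
     (\<forall>k. norm (y (Suc k) - y k) \<le> t (Suc k) - t k \<and> norm (xs - y k) \<le> tt - t k) \<and>
     (lambda f f' R < R \<longrightarrow> (\<forall>k. norm (xs - y (Suc k)) \<le>
        ((1 + \<theta>) / 2 * (left_deriv f' (lambda f f' R) / \<bar>f' (lambda f f' R)\<bar>) * norm (xs - y k)
          + \<theta> * ((2 + f' (lambda f f' R)) / \<bar>f' (lambda f f' R)\<bar>)) * norm (xs - y k))) \<and>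
     (lambda f f' R < R \<and> \<theta> < kappa f R / (4 + kappa f R) \<longrightarrow>
        (\<forall>k. norm (xs - y (Suc k)) \<le> ((1 + \<theta>) / 2 + 2 * \<theta> / kappa f R) * norm (xs - y k)))"
proof -
  interpret inexact_newton_iteration f f' R F F' Finv C x0 \<theta> N t0 \<epsilon>0 y0 y t \<epsilon>
    by unfold_locales (fact assms)+
  have "y k \<in> ball x0 (tbar f' R) \<and> t k < tbar f' R \<and> 0 \<le> \<epsilon> k" for k
    using iterate_in_ball_lambda[of k] t_bounds[of k] \<epsilon>_bounds[of k] lambda_le_tbar by auto
  moreover have "lim y \<in> cball x0 (tstar f R)"
    using limit_norm_le_tstar by (simp add: dist_norm norm_minus_commute)
  ultimately show ?thesis
    using iterate_in_K majorant_in_Omega strict_mono_t t_limit mono_\<epsilon> \<epsilon>_limit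
      residual_le residual_bound_geometric iterate_in_ball_lambda iterate_limit
      limit_in_ball_taubar limit_is_zero limit_unique_zero
      iterate_step_le rate_left_deriv rate_kappa
    by (intro exI[of _ "lim t"] exI[of _ "lim \<epsilon>"] exI[of _ "lim y"]) blast
qed

end
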